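(* Let $H$ be a subgroup of a finite group $G$, let $\theta$ be a representation of $G$ and $\chi$ a representation of $H$. Let $\mathrm{Irr}(G\mid\chi)$ denote the set of irreducible representations $\rho$ of $G$ with $\langle\mathrm{Res}^G_H\rho,\chi\rangle\neq0$. Suppose every irreducible $\rho$ with $\langle\rho,\theta\rangle\neq0$ lies in $\mathrm{Irr}(G\mid\chi)$. Then there exists $\rho\in\mathrm{Irr}(G\mid\chi)$ with $\langle\rho,\theta\rangle\geq\dim(\theta)/\dim(\mathrm{Ind}_H^G\chi)$. *)

theory Defs
  imports "HOL-Algebra.Coset" "Jordan_Normal_Form.Matrix"
begin

definition is_rep :: "('a,'b) monoid_scheme \<Rightarrow> nat \<Rightarrow> ('a \<Rightarrow> complex mat) \<Rightarrow> bool" where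
  "is_rep G n \<rho> \<longleftrightarrow>
     (\<forall>g\<in>carrier G. \<rho> g \<in> carrier_mat n n) \<and>
     \<rho> \<one>\<^bsub>G\<^esub> = 1\<^sub>m n \<and>
     (\<forall>g\<in>carrier G. \<forall>h\<in>carrier G. \<rho> (g \<otimes>\<^bsub>G\<^esub> h) = \<rho> g * \<rho> h)"

definition invariant_subspace :: "('a,'b) monoid_scheme \<Rightarrow> nat \<Rightarrow> ('a \<Rightarrow> complex mat) \<Rightarrow> complex vec set \<Rightarrow> bool" where
  "invariant_subspace G n \<rho> W \<longleftrightarrow>
     W \<subseteq> carrier_vec n \<and> 0\<^sub>v n \<in> W \<and>
     (\<forall>v\<in>W. \<forall>w\<in>W. v + w \<in> W) \<and>
     (\<forall>c. \<forall>v\<in>W. c \<cdot>\<^sub>v v \<in> W) \<and>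
     (\<forall>g\<in>carrier G. \<forall>v\<in>W. \<rho> g *\<^sub>v v \<in> W)"

definition is_irrep :: "('a,'b) monoid_scheme \<Rightarrow> nat \<Rightarrow> ('a \<Rightarrow> complex mat) \<Rightarrow> bool" where
  "is_irrep G n \<rho> \<longleftrightarrow> is_rep G n \<rho> \<and> n > 0 \<and>
     (\<forall>W. invariant_subspace G n \<rho> W \<longrightarrow> W = {0\<^sub>v n} \<or> W = carrier_vec n)"

definition mat_trace :: "complex mat \<Rightarrow> complex" where
  "mat_trace A = (\<Sum>i<dim_row A. A $$ (i, i))"

definition rep_inner :: "('a,'b) monoid_scheme \<Rightarrow> ('a \<Rightarrow> complex mat) \<Rightarrow> ('a \<Rightarrow> complex mat) \<Rightarrow> complex" where
  "rep_inner G \<rho> \<theta> =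
     (\<Sum>g\<in>carrier G. mat_trace (\<rho> g) * cnj (mat_trace (\<theta> g))) / of_nat (card (carrier G))"

definition coset_reps :: "('a,'b) monoid_scheme \<Rightarrow> 'a set \<Rightarrow> 'a list" where
  "coset_reps G H = (SOME rs. distinct rs \<and> set rs \<subseteq> carrier G \<and>
      (\<forall>x\<in>carrier G. \<exists>!i. i < length rs \<and> x \<in> (rs ! i) <#\<^bsub>G\<^esub> H))"

text \<open>Induced representation Ind_H^G chi, chi of dimension d, realised as block matrices
  indexed by (coset representative, basis vector of chi).\<close>
definition ind_rep :: "('a,'b) monoid_scheme \<Rightarrow> 'a set \<Rightarrow> nat \<Rightarrow> ('a \<Rightarrow> complex mat) \<Rightarrow> 'a \<Rightarrow> complex mat" where
  "ind_rep G H d \<chi> g =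
     (let rs = coset_reps G H; m = length rs in
      mat (m * d) (m * d) (\<lambda>(i, j).
        let x = inv\<^bsub>G\<^esub> (rs ! (i div d)) \<otimes>\<^bsub>G\<^esub> g \<otimes>\<^bsub>G\<^esub> (rs ! (j div d)) in
        if x \<in> H then \<chi> x $$ (i mod d, j mod d) else 0))"

end

(*
  Decompose the regular representation R of G into irreducibles psi_1, ..., psi_s (with
  repetitions).  The character of R is |G| at the identity and 0 elsewhere, so
  <R, theta> = dim theta = n and <Res_H R, chi> = |G| d / |H| <= [G:H] d = dim Ind_H^G chi.
  Both inner products split as sums over i of the natural numbers a_i = <psi_i, theta> and
  t_i = <Res_H psi_i, chi>, and by hypothesis a_i <> 0 forces t_i >= 1.  Choosing i with
  t_i <> 0 and a_i maximal gives n = sum a_i <= a_i * sum t_i <= a_i * dim Ind_H^G chi.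
  Integrality of the inner products comes from complete reducibility (averaging a
  projection over G) and the orthogonality of irreducible characters (Schur's lemma).
*)
theory Submission
  imports Defs "Jordan_Normal_Form.Spectral_Radius"
begin

lemma sum_list_in_Nats: "(\<And>x. x \<in> set xs \<Longrightarrow> f x \<in> \<nat>) \<Longrightarrow> (\<Sum>x\<leftarrow>xs. f x) \<in> \<nat>"
  by (induction xs) auto

lemma sum_list_le_max_mult_sum_list:
  fixes a t :: "'x \<Rightarrow> nat"
  assumes supp: "\<And>x. x \<in> set xs \<Longrightarrow> a x \<noteq> 0 \<Longrightarrow> t x \<noteq> 0" and t: "(\<Sum>x\<leftarrow>xs. t x) \<noteq> 0"
  shows "\<exists>y\<in>set xs. t y \<noteq> 0 \<and> (\<Sum>x\<leftarrow>xs. a x) \<le> a y * (\<Sum>x\<leftarrow>xs. t x)"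
proof -
  define S where "S = {x \<in> set xs. t x \<noteq> 0}"
  have "S \<noteq> {}" using t unfolding S_def by (induction xs) auto
  then obtain y where y: "y \<in> S" "a y = Max (a ` S)"
    using Max_in[of "a ` S"] unfolding S_def by fastforce
  have "a x \<le> a y * t x" if "x \<in> set xs" for x
  proof (cases "t x = 0")
    case False
    then have "a x \<le> a y" using y that Max_ge[of "a ` S" "a x"] unfolding S_def by auto
    then show ?thesis using False by (simp add: le_trans)
  next
    case True
    then show ?thesis using supp[OF that] by (cases "a x = 0") auto
  qed
  then have "(\<Sum>x\<leftarrow>xs. a x) \<le> (\<Sum>x\<leftarrow>xs. a y * t x)" by (rule sum_list_mono)
  then show ?thesis using y unfolding S_def by (auto simp: sum_list_const_mult)
qed

lemma mat_trace_mult_comm: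
  fixes A B :: "complex mat"
  assumes A: "A \<in> carrier_mat n m" and B: "B \<in> carrier_mat m n"
  shows "mat_trace (A * B) = mat_trace (B * A)"
proof -
  have "mat_trace (A * B) = (\<Sum>i<n. \<Sum>l<m. A $$ (i,l) * B $$ (l,i))"
    using A B by (auto simp: mat_trace_def scalar_prod_def lessThan_atLeast0 intro!: sum.cong)
  also have "\<dots> = (\<Sum>l<m. \<Sum>i<n. B $$ (l,i) * A $$ (i,l))"
    by (subst sum.swap) (simp add: mult.commute)
  also have "\<dots> = mat_trace (B * A)"
    using A B by (auto simp: mat_trace_def scalar_prod_def lessThan_atLeast0 intro!: sum.cong)
  finally show ?thesis .
qed

lemma mat_trace_one [simp]: "mat_trace (1\<^sub>m k) = of_nat k"
  by (simp add: mat_trace_def)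

lemma mat_trace_minus:
  "A \<in> carrier_mat n n \<Longrightarrow> B \<in> carrier_mat n n \<Longrightarrow> mat_trace (A - B) = mat_trace A - mat_trace B"
  by (simp add: mat_trace_def sum_subtractf)

lemma mult_mat_vec_zero: "A \<in> carrier_mat m k \<Longrightarrow> A *\<^sub>v 0\<^sub>v k = (0\<^sub>v m :: 'a :: semiring_0 vec)"
  by (auto simp: scalar_prod_def)

lemma zero_mult_mat_vec [simp]: "v \<in> carrier_vec k \<Longrightarrow> 0\<^sub>m m k *\<^sub>v v = (0\<^sub>v m :: 'a :: semiring_0 vec)"
  by (auto simp: scalar_prod_def)

lemma mult_mat_vec_index:
  "A \<in> carrier_mat n k \<Longrightarrow> v \<in> carrier_vec k \<Longrightarrow> i < n \<Longrightarrow> (A *\<^sub>v v) $ i = (\<Sum>j<k. A $$ (i,j) * v $ j)"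
  by (auto simp: scalar_prod_def lessThan_atLeast0 intro!: sum.cong)

lemma mat_eq_if_mult_vec_eq:
  fixes A B :: "'a :: semiring_1 mat"
  assumes A: "A \<in> carrier_mat n k" and B: "B \<in> carrier_mat n k"
    and eq: "\<And>v. v \<in> carrier_vec k \<Longrightarrow> A *\<^sub>v v = B *\<^sub>v v"
  shows "A = B"
proof (rule eq_matI)
  fix i j assume "i < dim_row B" and "j < dim_col B"
  moreover have "(A *\<^sub>v unit_vec k j) $ i = (B *\<^sub>v unit_vec k j) $ i" using eq[of "unit_vec k j"] by simp
  ultimately show "A $$ (i, j) = B $$ (i, j)" using A B by simp
qed (use A B in auto)

definition matrix_unit :: "nat \<Rightarrow> nat \<Rightarrow> nat \<Rightarrow> nat \<Rightarrow> 'a :: semiring_1 mat" where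
  "matrix_unit m k a b = mat m k (\<lambda>(i,j). if i = a \<and> j = b then 1 else 0)"

lemma matrix_unit_carrier [simp]: "matrix_unit m k a b \<in> carrier_mat m k"
  and matrix_unit_dims [simp]: "dim_row (matrix_unit m k a b) = m" "dim_col (matrix_unit m k a b) = k"
  by (simp_all add: matrix_unit_def)

lemma mat_trace_matrix_unit: "a < m \<Longrightarrow> b < m \<Longrightarrow> mat_trace (matrix_unit m m a b) = (if a = b then 1 else 0)"
  by (simp add: mat_trace_def matrix_unit_def)

lemma mult_matrix_unit_mult_index:
  fixes A B :: "'a :: comm_semiring_1 mat"
  assumes A: "A \<in> carrier_mat m m" and B: "B \<in> carrier_mat k k"
    and a: "a < m" and b: "b < k" and i: "i < m" and j: "j < k"
  shows "(A * matrix_unit m k a b * B) $$ (i,j) = A $$ (i,a) * B $$ (b,j)"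
proof -
  have AE: "(A * matrix_unit m k a b) $$ (i,l) = (if l = b then A $$ (i,a) else 0)" if l: "l < k" for l
  proof -
    have "(A * matrix_unit m k a b) $$ (i,l) = (\<Sum>x<m. A $$ (i,x) * (if x = a \<and> l = b then 1 else 0))"
      using A i l by (auto simp: matrix_unit_def scalar_prod_def lessThan_atLeast0 intro!: sum.cong)
    also have "\<dots> = (\<Sum>x<m. if x = a then (if l = b then A $$ (i,x) else 0) else 0)"
      by (rule sum.cong) auto
    finally show ?thesis using a by simp
  qed
  have "(A * matrix_unit m k a b * B) $$ (i,j) = (\<Sum>l<k. (A * matrix_unit m k a b) $$ (i,l) * B $$ (l,j))"
    using A B i j by (auto simp: scalar_prod_def lessThan_atLeast0 intro!: sum.cong)
  also have "\<dots> = (\<Sum>l<k. if l = b then A $$ (i,a) * B $$ (l,j) else 0)"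
    by (rule sum.cong) (auto simp: AE)
  finally show ?thesis using b by simp
qed

lemma idempotent_one_minus:
  fixes E :: "'a :: ring_1 mat"
  assumes E: "E \<in> carrier_mat n n" and idem: "E * E = E"
  shows "(1\<^sub>m n - E) * (1\<^sub>m n - E) = 1\<^sub>m n - E"
proof -
  have IE: "1\<^sub>m n - E \<in> carrier_mat n n" using E by (intro minus_carrier_mat) simp
  have "(1\<^sub>m n - E) * (1\<^sub>m n - E) = (1\<^sub>m n - E) - (1\<^sub>m n * E - E * E)"
    using mult_minus_distrib_mat[OF IE one_carrier_mat E] minus_mult_distrib_mat[OF one_carrier_mat E E]
      right_mult_one_mat[OF IE] by simp
  also have "\<dots> = 1\<^sub>m n - E" using E idem by (intro eq_matI) auto
  finally show ?thesis .
qed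

definition injective_mat :: "'a :: semiring_0 mat \<Rightarrow> bool" where
  "injective_mat A \<longleftrightarrow>
     (\<forall>v\<in>carrier_vec (dim_col A). A *\<^sub>v v = 0\<^sub>v (dim_row A) \<longrightarrow> v = 0\<^sub>v (dim_col A))"

definition mat_range :: "'a :: semiring_0 mat \<Rightarrow> 'a vec set" where
  "mat_range A = (\<lambda>v. A *\<^sub>v v) ` carrier_vec (dim_col A)"

lemma injective_mat_dim_le:
  fixes A :: "'a :: idom mat"
  assumes A: "A \<in> carrier_mat n k" and inj: "injective_mat A"
  shows "k \<le> n"
proof (rule ccontr)
  assume "\<not> k \<le> n"
  then have k: "k - 1 < k" "\<not> k - 1 < n" by auto
  \<comment> \<open>pad A with zero rows to a singular square matrix\<close>
  define A' where "A' = mat k k (\<lambda>(i,j). if i < n then A $$ (i,j) else 0)"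
  have A': "A' \<in> carrier_mat k k" unfolding A'_def by simp
  have "transpose_mat A' *\<^sub>v unit_vec k (k - 1) = 0\<^sub>v k"
    by (rule eq_vecI) (use k in \<open>auto simp: A'_def\<close>)
  then have "\<exists>v\<in>carrier_vec k. v \<noteq> 0\<^sub>v k \<and> transpose_mat A' *\<^sub>v v = 0\<^sub>v k"
    using k by (intro bexI[of _ "unit_vec k (k - 1)"]) auto
  then have "det (transpose_mat A') = 0"
    using det_0_iff_vec_prod_zero[of "transpose_mat A'" k] A' by auto
  then have "det A' = 0" using det_transpose[OF A'] by simp
  then obtain v where v: "v \<in> carrier_vec k" "v \<noteq> 0\<^sub>v k" "A' *\<^sub>v v = 0\<^sub>v k"
    using det_0_iff_vec_prod_zero[OF A'] by auto
  have "A *\<^sub>v v = 0\<^sub>v n"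
  proof (rule eq_vecI)
    fix i assume "i < dim_vec (0\<^sub>v n :: 'a vec)"
    then have i: "i < n" by simp
    have "(A' *\<^sub>v v) $ i = (A *\<^sub>v v) $ i"
      using i k A v(1) by (auto simp: A'_def scalar_prod_def row_def)
    then show "(A *\<^sub>v v) $ i = 0\<^sub>v n $ i" using v(3) i k by simp
  qed (use A in simp)
  with v inj A show False unfolding injective_mat_def by auto
qed

lemma injective_square_mat_invertible:
  fixes A :: "'a :: field mat"
  assumes A: "A \<in> carrier_mat n n" and inj: "injective_mat A"
  shows "\<exists>B\<in>carrier_mat n n. A * B = 1\<^sub>m n \<and> B * A = 1\<^sub>m n"
proof -
  have "det A \<noteq> 0" using det_0_iff_vec_prod_zero[OF A] inj A unfolding injective_mat_def by auto
  from det_non_zero_imp_unit[OF A this, of "()"]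
  show ?thesis unfolding Units_def ring_mat_simps by auto
qed

lemma mat_adjoint_carrier [simp]: "A \<in> carrier_mat n k \<Longrightarrow> mat_adjoint A \<in> carrier_mat k n"
  by (auto simp: mat_adjoint_def)

lemma mat_adjoint_index [simp]:
  "i < dim_col A \<Longrightarrow> j < dim_row A \<Longrightarrow> mat_adjoint A $$ (i,j) = conjugate (A $$ (j,i))"
  by (simp add: mat_adjoint_def mat_of_rows_index)

lemma mat_adjoint_dims [simp]:
  "dim_row (mat_adjoint A) = dim_col A" "dim_col (mat_adjoint A) = dim_row A"
  by (simp_all add: mat_adjoint_def)

lemma mat_adjoint_mult:
  fixes A B :: "'a :: conjugatable_field mat"
  assumes "A \<in> carrier_mat n m" and "B \<in> carrier_mat m k"
  shows "mat_adjoint (A * B) = mat_adjoint B * mat_adjoint A"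
proof (rule eq_matI)
  fix i j assume "i < dim_row (mat_adjoint B * mat_adjoint A)" "j < dim_col (mat_adjoint B * mat_adjoint A)"
  then have i: "i < k" and j: "j < n" using assms by auto
  have "mat_adjoint (A * B) $$ (i,j) = conjugate (\<Sum>l<m. A $$ (j,l) * B $$ (l,i))"
    using assms i j by (auto simp: scalar_prod_def lessThan_atLeast0 intro!: arg_cong[where f=conjugate] sum.cong)
  also have "\<dots> = (\<Sum>l<m. conjugate (B $$ (l,i)) * conjugate (A $$ (j,l)))"
    by (simp add: sum_conjugate conjugate_dist_mul mult.commute)
  also have "\<dots> = (mat_adjoint B * mat_adjoint A) $$ (i,j)"
    using assms i j by (auto simp: scalar_prod_def lessThan_atLeast0 intro!: sum.cong)
  finally show "mat_adjoint (A * B) $$ (i,j) = (mat_adjoint B * mat_adjoint A) $$ (i,j)" .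
qed (use assms in auto)

lemma mat_trace_mat_adjoint: "A \<in> carrier_mat n n \<Longrightarrow> mat_trace (mat_adjoint A) = cnj (mat_trace A)"
  by (simp add: mat_trace_def)

lemma mat_adjoint_cscalar_prod:
  fixes A :: "'a :: conjugatable_field mat"
  assumes A: "A \<in> carrier_mat n k" and w: "w \<in> carrier_vec n" and v: "v \<in> carrier_vec k"
  shows "(mat_adjoint A *\<^sub>v w) \<bullet>c v = w \<bullet>c (A *\<^sub>v v)"
proof -
  have "(mat_adjoint A *\<^sub>v w) \<bullet>c v = (\<Sum>i<k. \<Sum>l<n. conjugate (A $$ (l,i)) * w $ l * conjugate (v $ i))"
    using A w v by (auto simp: scalar_prod_def lessThan_atLeast0 sum_distrib_right intro!: sum.cong)
  also have "\<dots> = (\<Sum>l<n. \<Sum>i<k. w $ l * conjugate (A $$ (l,i) * v $ i))"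
    by (subst sum.swap) (auto simp: conjugate_dist_mul ac_simps intro!: sum.cong)
  also have "\<dots> = w \<bullet>c (A *\<^sub>v v)"
    using A w v by (auto simp: scalar_prod_def lessThan_atLeast0 sum_distrib_left sum_conjugate
        intro!: sum.cong)
  finally show ?thesis .
qed

lemma injective_mat_gram:
  fixes A :: "'a :: conjugatable_ordered_field mat"
  assumes A: "A \<in> carrier_mat n k" and inj: "injective_mat A"
  shows "injective_mat (mat_adjoint A * A)"
  unfolding injective_mat_def
proof (intro ballI impI)
  fix v assume "v \<in> carrier_vec (dim_col (mat_adjoint A * A))"
    and "(mat_adjoint A * A) *\<^sub>v v = 0\<^sub>v (dim_row (mat_adjoint A * A))"
  then have v: "v \<in> carrier_vec k" and "(mat_adjoint A * A) *\<^sub>v v = 0\<^sub>v k"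
    using A by auto
  then have "mat_adjoint A *\<^sub>v (A *\<^sub>v v) = 0\<^sub>v k"
    using A assoc_mult_mat_vec[of "mat_adjoint A" k n A k v] by simp
  then have "(A *\<^sub>v v) \<bullet>c (A *\<^sub>v v) = 0"
    using mat_adjoint_cscalar_prod[OF A _ v, of "A *\<^sub>v v"] A v by simp
  then have "A *\<^sub>v v = 0\<^sub>v n"
    using conjugate_square_eq_0_vec[OF mult_mat_vec_carrier[OF A v]] by simp
  then show "v = 0\<^sub>v (dim_col (mat_adjoint A * A))" using inj A v unfolding injective_mat_def by auto
qed

lemma injective_mat_left_inverse:
  fixes A :: "'a :: conjugatable_ordered_field mat"
  assumes A: "A \<in> carrier_mat n k" and inj: "injective_mat A"
  shows "\<exists>L\<in>carrier_mat k n. L * A = 1\<^sub>m k"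
proof -
  have "mat_adjoint A * A \<in> carrier_mat k k" using A by auto
  then obtain K where K: "K \<in> carrier_mat k k" "K * (mat_adjoint A * A) = 1\<^sub>m k"
    using injective_square_mat_invertible injective_mat_gram[OF A inj] by blast
  then have "(K * mat_adjoint A) * A = 1\<^sub>m k" using A by (simp add: assoc_mult_mat[of _ k k _ n _ k])
  then show ?thesis using K A by (intro bexI[of _ "K * mat_adjoint A"]) auto
qed

definition is_subspace :: "nat \<Rightarrow> 'a :: field vec set \<Rightarrow> bool" where
  "is_subspace n W \<longleftrightarrow> W \<subseteq> carrier_vec n \<and> 0\<^sub>v n \<in> W \<and> (\<forall>v\<in>W. \<forall>w\<in>W. v + w \<in> W)
     \<and> (\<forall>c. \<forall>v\<in>W. c \<cdot>\<^sub>v v \<in> W)"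

lemma is_subspace_mat_range:
  fixes A :: "'a :: field mat"
  assumes A: "A \<in> carrier_mat n k"
  shows "is_subspace n (mat_range A)"
  unfolding is_subspace_def mat_range_def
proof (intro conjI ballI allI)
  show "(\<lambda>v. A *\<^sub>v v) ` carrier_vec (dim_col A) \<subseteq> carrier_vec n" using A by auto
  show "0\<^sub>v n \<in> (\<lambda>v. A *\<^sub>v v) ` carrier_vec (dim_col A)"
    using A mult_mat_vec_zero[OF A] by (intro image_eqI[of _ _ "0\<^sub>v k"]) auto
next
  fix v w assume "v \<in> (\<lambda>v. A *\<^sub>v v) ` carrier_vec (dim_col A)" "w \<in> (\<lambda>v. A *\<^sub>v v) ` carrier_vec (dim_col A)"
  then show "v + w \<in> (\<lambda>v. A *\<^sub>v v) ` carrier_vec (dim_col A)"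
    using A by (auto simp: mult_add_distrib_mat_vec[OF A, symmetric])
next
  fix c v assume "v \<in> (\<lambda>v. A *\<^sub>v v) ` carrier_vec (dim_col A)"
  then show "c \<cdot>\<^sub>v v \<in> (\<lambda>v. A *\<^sub>v v) ` carrier_vec (dim_col A)"
    using A by (auto simp: mult_mat_vec[OF A, symmetric])
qed

lemma injective_mat_append_col:
  fixes A :: "'a :: field mat"
  assumes A: "A \<in> carrier_mat n k" and inj: "injective_mat A"
    and w: "w \<in> carrier_vec n" and w_range: "w \<notin> mat_range A"
  defines "A' \<equiv> mat n (Suc k) (\<lambda>(i,j). if j < k then A $$ (i,j) else w $ i)"
  shows "\<And>v. v \<in> carrier_vec (Suc k) \<Longrightarrow> A' *\<^sub>v v = A *\<^sub>v vec k (\<lambda>j. v $ j) + (v $ k) \<cdot>\<^sub>v w"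
    and "injective_mat A'"
proof -
  have A'_mult: "A' *\<^sub>v v = A *\<^sub>v vec k (\<lambda>j. v $ j) + (v $ k) \<cdot>\<^sub>v w" if v: "v \<in> carrier_vec (Suc k)" for v
  proof (rule eq_vecI)
    fix i assume "i < dim_vec (A *\<^sub>v vec k (\<lambda>j. v $ j) + (v $ k) \<cdot>\<^sub>v w)"
    then have i: "i < n" using w by simp
    have "(A' *\<^sub>v v) $ i = (\<Sum>j<k. A $$ (i,j) * v $ j) + w $ i * v $ k"
      using mult_mat_vec_index[of A' n "Suc k" v i] v i by (simp add: A'_def)
    also have "(\<Sum>j<k. A $$ (i,j) * v $ j) = (A *\<^sub>v vec k (\<lambda>j. v $ j)) $ i"
      using mult_mat_vec_index[OF A _ i, of "vec k (\<lambda>j. v $ j)"] by simp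
    finally show "(A' *\<^sub>v v) $ i = (A *\<^sub>v vec k (\<lambda>j. v $ j) + (v $ k) \<cdot>\<^sub>v w) $ i"
      using i w A by (simp add: mult.commute)
  qed (use A w in \<open>simp add: A'_def\<close>)
  then show "\<And>v. v \<in> carrier_vec (Suc k) \<Longrightarrow> A' *\<^sub>v v = A *\<^sub>v vec k (\<lambda>j. v $ j) + (v $ k) \<cdot>\<^sub>v w" .
  show "injective_mat A'" unfolding injective_mat_def
  proof (intro ballI impI)
    fix v assume "v \<in> carrier_vec (dim_col A')" and "A' *\<^sub>v v = 0\<^sub>v (dim_row A')"
    then have v: "v \<in> carrier_vec (Suc k)"
      and z: "A *\<^sub>v vec k (\<lambda>j. v $ j) + (v $ k) \<cdot>\<^sub>v w = 0\<^sub>v n"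
      using A'_mult by (auto simp: A'_def)
    have z_i: "(A *\<^sub>v vec k (\<lambda>j. v $ j)) $ i = - (v $ k * w $ i)" if i: "i < n" for i
      using arg_cong[OF z, of "\<lambda>u. u $ i"] i w A by (simp add: eq_neg_iff_add_eq_0)
    have vk: "v $ k = 0"
    proof (rule ccontr)
      assume vk: "v $ k \<noteq> 0"
      have "w = A *\<^sub>v ((- 1 / v $ k) \<cdot>\<^sub>v vec k (\<lambda>j. v $ j))"
      proof (rule eq_vecI)
        fix i assume "i < dim_vec (A *\<^sub>v ((- 1 / v $ k) \<cdot>\<^sub>v vec k (\<lambda>j. v $ j)))"
        then have i: "i < n" using A by simp
        have "(A *\<^sub>v ((- 1 / v $ k) \<cdot>\<^sub>v vec k (\<lambda>j. v $ j))) $ i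
            = (- 1 / v $ k) * (A *\<^sub>v vec k (\<lambda>j. v $ j)) $ i"
          using A i by (simp add: mult_mat_vec[OF A])
        also have "\<dots> = w $ i" using z_i[OF i] vk by simp
        finally show "w $ i = (A *\<^sub>v ((- 1 / v $ k) \<cdot>\<^sub>v vec k (\<lambda>j. v $ j))) $ i" by simp
      qed (use w A in simp)
      then show False using w_range A unfolding mat_range_def by auto
    qed
    have "A *\<^sub>v vec k (\<lambda>j. v $ j) = 0\<^sub>v n"
      by (rule eq_vecI) (use z_i vk A in auto)
    then have "vec k (\<lambda>j. v $ j) = 0\<^sub>v k" using inj A unfolding injective_mat_def by auto
    then have "\<forall>j<k. v $ j = 0" by (metis index_vec index_zero_vec(1))
    then show "v = 0\<^sub>v (dim_col A')" using vk v by (intro eq_vecI) (auto simp: A'_def less_Suc_eq)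
  qed
qed

lemma subspace_eq_mat_range:
  fixes W :: "'a :: field vec set"
  assumes W: "is_subspace n W"
  shows "\<exists>k A. A \<in> carrier_mat n k \<and> injective_mat A \<and> mat_range A = W"
proof -
  define P where "P k \<longleftrightarrow> (\<exists>A\<in>carrier_mat n k. injective_mat A \<and> mat_range A \<subseteq> W)" for k
  have "P 0"
  proof -
    have "injective_mat (0\<^sub>m n 0 :: 'a mat)" unfolding injective_mat_def by auto
    moreover have "mat_range (0\<^sub>m n 0 :: 'a mat) \<subseteq> W"
      using W by (auto simp: mat_range_def is_subspace_def)
    ultimately show ?thesis unfolding P_def by (intro bexI[of _ "0\<^sub>m n 0"]) auto
  qed
  moreover have P_le: "P k \<Longrightarrow> k \<le> n" for k using injective_mat_dim_le unfolding P_def by blast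
  ultimately obtain k where "P k" and k_max: "\<And>k'. P k' \<Longrightarrow> k' \<le> k"
    using Max_in[of "Collect P"] Max_ge[of "Collect P"] finite_subset[of "Collect P" "{..n}"]
    by (metis atMost_iff empty_iff finite_atMost mem_Collect_eq subsetI)
  then obtain A where A: "A \<in> carrier_mat n k" and inj: "injective_mat A" and AW: "mat_range A \<subseteq> W"
    unfolding P_def by blast
  have "W \<subseteq> mat_range A"
  proof
    fix w assume wW: "w \<in> W"
    show "w \<in> mat_range A"
    proof (rule ccontr)
      assume w_range: "w \<notin> mat_range A"
      have w: "w \<in> carrier_vec n" using wW W unfolding is_subspace_def by auto
      define A' where "A' = mat n (Suc k) (\<lambda>(i,j). if j < k then A $$ (i,j) else w $ i)"
      have A': "A' \<in> carrier_mat n (Suc k)" unfolding A'_def by simp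
      have "mat_range A' \<subseteq> W"
      proof
        fix u assume "u \<in> mat_range A'"
        then obtain v where v: "v \<in> carrier_vec (Suc k)" and u: "u = A' *\<^sub>v v"
          using A' unfolding mat_range_def by auto
        have "A *\<^sub>v vec k (\<lambda>j. v $ j) \<in> W" using AW A unfolding mat_range_def by auto
        moreover have "(v $ k) \<cdot>\<^sub>v w \<in> W" using wW W unfolding is_subspace_def by auto
        ultimately show "u \<in> W"
          using W injective_mat_append_col(1)[OF A inj w w_range v] unfolding u A'_def is_subspace_def
          by auto
      qed
      then have "P (Suc k)"
        using A' injective_mat_append_col(2)[OF A inj w w_range] unfolding P_def A'_def by blast
      then show False using k_max by fastforce
    qed
  qed
  then show ?thesis using A inj AW by blast
qed

definition mat_sum :: "nat \<Rightarrow> nat \<Rightarrow> 'g set \<Rightarrow> ('g \<Rightarrow> 'a :: semiring_0 mat) \<Rightarrow> 'a mat" where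
  "mat_sum n k S f = mat n k (\<lambda>(i,j). \<Sum>g\<in>S. f g $$ (i,j))"

lemma mat_sum_carrier [simp]: "mat_sum n k S f \<in> carrier_mat n k"
  and mat_sum_dims [simp]: "dim_row (mat_sum n k S f) = n" "dim_col (mat_sum n k S f) = k"
  and mat_sum_index [simp]: "i < n \<Longrightarrow> j < k \<Longrightarrow> mat_sum n k S f $$ (i,j) = (\<Sum>g\<in>S. f g $$ (i,j))"
  by (simp_all add: mat_sum_def)

lemma mat_sum_cong: "(\<And>g. g \<in> S \<Longrightarrow> f g = f' g) \<Longrightarrow> mat_sum n k S f = mat_sum n k S f'"
  unfolding mat_sum_def by (auto intro!: sum.cong)

lemma mat_sum_reindex:
  assumes "bij_betw h S T"
  shows "mat_sum n k T f = mat_sum n k S (\<lambda>g. f (h g))"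
proof (rule eq_matI)
  fix i j assume "i < dim_row (mat_sum n k S (\<lambda>g. f (h g)))" "j < dim_col (mat_sum n k S (\<lambda>g. f (h g)))"
  then show "mat_sum n k T f $$ (i,j) = mat_sum n k S (\<lambda>g. f (h g)) $$ (i,j)"
    using sum.reindex_bij_betw[OF assms, of "\<lambda>g. f g $$ (i,j)"] by simp
qed auto

lemma mat_sum_const: "P \<in> carrier_mat n k \<Longrightarrow> mat_sum n k S (\<lambda>g. P) = of_nat (card S) \<cdot>\<^sub>m P"
  by (rule eq_matI) auto

lemma mult_mat_sum:
  fixes A :: "'a :: semiring_0 mat"
  assumes A: "A \<in> carrier_mat r n" and f: "\<And>g. g \<in> S \<Longrightarrow> f g \<in> carrier_mat n k"
  shows "A * mat_sum n k S f = mat_sum r k S (\<lambda>g. A * f g)"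
proof (rule eq_matI)
  fix i j assume "i < dim_row (mat_sum r k S (\<lambda>g. A * f g))" "j < dim_col (mat_sum r k S (\<lambda>g. A * f g))"
  then have i: "i < r" and j: "j < k" by auto
  have "(A * mat_sum n k S f) $$ (i,j) = (\<Sum>l<n. A $$ (i,l) * (\<Sum>g\<in>S. f g $$ (l,j)))"
    using A i j by (auto simp: scalar_prod_def lessThan_atLeast0 intro!: sum.cong)
  also have "\<dots> = (\<Sum>g\<in>S. \<Sum>l<n. A $$ (i,l) * f g $$ (l,j))"
    by (simp add: sum_distrib_left sum.swap[of _ S])
  also have "\<dots> = mat_sum r k S (\<lambda>g. A * f g) $$ (i,j)"
    using A f[THEN carrier_matD(1)] f[THEN carrier_matD(2)] i j
    by (auto simp: scalar_prod_def lessThan_atLeast0 intro!: sum.cong)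
  finally show "(A * mat_sum n k S f) $$ (i,j) = mat_sum r k S (\<lambda>g. A * f g) $$ (i,j)" .
qed (use A in auto)

lemma mat_sum_mult:
  fixes A :: "'a :: semiring_0 mat"
  assumes A: "A \<in> carrier_mat k r" and f: "\<And>g. g \<in> S \<Longrightarrow> f g \<in> carrier_mat n k"
  shows "mat_sum n k S f * A = mat_sum n r S (\<lambda>g. f g * A)"
proof (rule eq_matI)
  fix i j assume "i < dim_row (mat_sum n r S (\<lambda>g. f g * A))" "j < dim_col (mat_sum n r S (\<lambda>g. f g * A))"
  then have i: "i < n" and j: "j < r" by auto
  have "(mat_sum n k S f * A) $$ (i,j) = (\<Sum>l<k. (\<Sum>g\<in>S. f g $$ (i,l)) * A $$ (l,j))"
    using A i j by (auto simp: scalar_prod_def lessThan_atLeast0 intro!: sum.cong)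
  also have "\<dots> = (\<Sum>g\<in>S. \<Sum>l<k. f g $$ (i,l) * A $$ (l,j))"
    by (simp add: sum_distrib_right sum.swap[of _ S])
  also have "\<dots> = mat_sum n r S (\<lambda>g. f g * A) $$ (i,j)"
    using A f[THEN carrier_matD(1)] f[THEN carrier_matD(2)] i j
    by (auto simp: scalar_prod_def lessThan_atLeast0 intro!: sum.cong)
  finally show "(mat_sum n k S f * A) $$ (i,j) = mat_sum n r S (\<lambda>g. f g * A) $$ (i,j)" .
qed (use A in auto)

lemma mat_trace_mat_sum:
  assumes "\<And>g. g \<in> S \<Longrightarrow> f g \<in> carrier_mat n n"
  shows "mat_trace (mat_sum n n S f) = (\<Sum>g\<in>S. mat_trace (f g))"
proof -
  have "mat_trace (mat_sum n n S f) = (\<Sum>i<n. \<Sum>g\<in>S. f g $$ (i,i))" by (simp add: mat_trace_def)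
  also have "\<dots> = (\<Sum>g\<in>S. \<Sum>i<n. f g $$ (i,i))" by (rule sum.swap)
  also have "\<dots> = (\<Sum>g\<in>S. mat_trace (f g))"
    by (rule sum.cong) (use assms in \<open>auto simp: mat_trace_def\<close>)
  finally show ?thesis .
qed

lemma mat_sum_mult_vec_index:
  assumes f: "\<And>g. g \<in> S \<Longrightarrow> f g \<in> carrier_mat n k" and v: "v \<in> carrier_vec k" and i: "i < n"
  shows "(mat_sum n k S f *\<^sub>v v) $ i = (\<Sum>g\<in>S. (f g *\<^sub>v v) $ i)"
proof -
  have "(mat_sum n k S f *\<^sub>v v) $ i = (\<Sum>j<k. (\<Sum>g\<in>S. f g $$ (i,j)) * v $ j)"
    using mult_mat_vec_index[OF mat_sum_carrier v i] i by simp
  also have "\<dots> = (\<Sum>g\<in>S. \<Sum>j<k. f g $$ (i,j) * v $ j)"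
    by (simp add: sum_distrib_right sum.swap[of _ S])
  also have "\<dots> = (\<Sum>g\<in>S. (f g *\<^sub>v v) $ i)"
    using mult_mat_vec_index[OF f v i] by simp
  finally show ?thesis .
qed

lemma mat_sum_mult_vec_cscalar_prod:
  fixes f :: "'g \<Rightarrow> 'a :: {conjugatable_ring, comm_ring} mat"
  assumes f: "\<And>g. g \<in> S \<Longrightarrow> f g \<in> carrier_mat n k" and v: "v \<in> carrier_vec k"
    and w: "w \<in> carrier_vec n"
  shows "(mat_sum n k S f *\<^sub>v v) \<bullet>c w = (\<Sum>g\<in>S. (f g *\<^sub>v v) \<bullet>c w)"
proof -
  have "(mat_sum n k S f *\<^sub>v v) \<bullet>c w = (\<Sum>i<n. (mat_sum n k S f *\<^sub>v v) $ i * conjugate (w $ i))"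
    using w by (simp add: scalar_prod_def lessThan_atLeast0)
  also have "\<dots> = (\<Sum>i<n. (\<Sum>g\<in>S. (f g *\<^sub>v v) $ i) * conjugate (w $ i))"
    by (rule sum.cong[OF refl], subst mat_sum_mult_vec_index[OF f v]) auto
  also have "\<dots> = (\<Sum>g\<in>S. (f g *\<^sub>v v) \<bullet>c w)"
    using f w by (auto simp: scalar_prod_def lessThan_atLeast0 sum_distrib_right sum.swap[of _ S])
  finally show ?thesis .
qed

section \<open>Representations and intertwiners\<close>

lemma (in group) bij_betw_mult_left: "g \<in> carrier G \<Longrightarrow> bij_betw (\<lambda>h. g \<otimes> h) (carrier G) (carrier G)"
  by (rule bij_betwI[where g="\<lambda>h. inv g \<otimes> h"]) (auto simp: m_assoc[symmetric])

lemma (in group) bij_betw_mult_right: "g \<in> carrier G \<Longrightarrow> bij_betw (\<lambda>h. h \<otimes> g) (carrier G) (carrier G)"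
  by (rule bij_betwI[where g="\<lambda>h. h \<otimes> inv g"]) (auto simp: m_assoc)

lemma rep_carrier: "is_rep G n \<rho> \<Longrightarrow> g \<in> carrier G \<Longrightarrow> \<rho> g \<in> carrier_mat n n"
  and rep_mult: "is_rep G n \<rho> \<Longrightarrow> g \<in> carrier G \<Longrightarrow> h \<in> carrier G \<Longrightarrow> \<rho> (g \<otimes>\<^bsub>G\<^esub> h) = \<rho> g * \<rho> h"
  and rep_one: "is_rep G n \<rho> \<Longrightarrow> \<rho> \<one>\<^bsub>G\<^esub> = 1\<^sub>m n"
  by (simp_all add: is_rep_def)

lemma (in group) rep_inv:
  assumes r: "is_rep G n \<rho>" and g: "g \<in> carrier G"
  shows "\<rho> g * \<rho> (inv g) = 1\<^sub>m n" and "\<rho> (inv g) * \<rho> g = 1\<^sub>m n"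
proof -
  show "\<rho> g * \<rho> (inv g) = 1\<^sub>m n" using rep_mult[OF r g inv_closed[OF g]] rep_one[OF r] g by simp
  show "\<rho> (inv g) * \<rho> g = 1\<^sub>m n" using rep_mult[OF r inv_closed[OF g] g] rep_one[OF r] g by simp
qed

lemma rep_subgroup: "is_rep G n \<rho> \<Longrightarrow> H \<subseteq> carrier G \<Longrightarrow> is_rep (G\<lparr>carrier := H\<rparr>) n \<rho>"
  unfolding is_rep_def by auto

lemma irrep_rep: "is_irrep G n \<rho> \<Longrightarrow> is_rep G n \<rho>"
  and irrep_dim_pos: "is_irrep G n \<rho> \<Longrightarrow> n > 0"
  and irrep_invariant_subspace:
    "is_irrep G n \<rho> \<Longrightarrow> invariant_subspace G n \<rho> W \<Longrightarrow> W = {0\<^sub>v n} \<or> W = carrier_vec n"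
  by (simp_all add: is_irrep_def)

lemma invariant_subspace_iff:
  "invariant_subspace G n \<rho> W \<longleftrightarrow> is_subspace n W \<and> (\<forall>g\<in>carrier G. \<forall>v\<in>W. \<rho> g *\<^sub>v v \<in> W)"
  by (auto simp: invariant_subspace_def is_subspace_def)

definition intertwines ::
  "('a,'b) monoid_scheme \<Rightarrow> ('a \<Rightarrow> complex mat) \<Rightarrow> ('a \<Rightarrow> complex mat) \<Rightarrow> complex mat \<Rightarrow> bool" where
  "intertwines G \<rho> \<sigma> T \<longleftrightarrow> (\<forall>g\<in>carrier G. \<rho> g * T = T * \<sigma> g)"

lemma intertwines_one_minus:
  assumes "intertwines G \<theta> \<theta> E" and E: "E \<in> carrier_mat n n"
    and tc: "\<And>g. g \<in> carrier G \<Longrightarrow> \<theta> g \<in> carrier_mat n n"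
  shows "intertwines G \<theta> \<theta> (1\<^sub>m n - E)"
  unfolding intertwines_def
proof
  fix g assume g: "g \<in> carrier G"
  have "\<theta> g * (1\<^sub>m n - E) = 1\<^sub>m n * \<theta> g - E * \<theta> g"
    using mult_minus_distrib_mat[OF tc[OF g] one_carrier_mat E] assms(1) g tc[OF g]
    unfolding intertwines_def by simp
  also have "\<dots> = (1\<^sub>m n - E) * \<theta> g" by (rule minus_mult_distrib_mat[symmetric, OF one_carrier_mat E tc[OF g]])
  finally show "\<theta> g * (1\<^sub>m n - E) = (1\<^sub>m n - E) * \<theta> g" .
qed

definition intertwiner_sum ::
  "('a,'b) monoid_scheme \<Rightarrow> ('a \<Rightarrow> complex mat) \<Rightarrow> ('a \<Rightarrow> complex mat) \<Rightarrow> complex mat \<Rightarrow> complex mat" where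
  "intertwiner_sum G \<rho> \<sigma> X = mat_sum (dim_row X) (dim_col X) (carrier G) (\<lambda>g. \<rho> g * X * \<sigma> (inv\<^bsub>G\<^esub> g))"

lemma intertwiner_sum_carrier [simp]: "X \<in> carrier_mat m k \<Longrightarrow> intertwiner_sum G \<rho> \<sigma> X \<in> carrier_mat m k"
  by (auto simp: intertwiner_sum_def)

lemma (in group) intertwines_intertwiner_sum:
  assumes r: "is_rep G m \<rho>" and s: "is_rep G k \<sigma>" and X: "X \<in> carrier_mat m k"
  shows "intertwines G \<rho> \<sigma> (intertwiner_sum G \<rho> \<sigma> X)"
  unfolding intertwines_def
proof
  fix h assume h: "h \<in> carrier G"
  have rc: "\<And>g. g \<in> carrier G \<Longrightarrow> \<rho> g \<in> carrier_mat m m" using rep_carrier[OF r] .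
  have sc: "\<And>g. g \<in> carrier G \<Longrightarrow> \<sigma> g \<in> carrier_mat k k" using rep_carrier[OF s] .
  have fc: "\<And>g. g \<in> carrier G \<Longrightarrow> \<rho> g * X * \<sigma> (inv g) \<in> carrier_mat m k"
    using rc sc X by (meson inv_closed mult_carrier_mat)
  let ?S = "\<lambda>f. mat_sum m k (carrier G) f"
  have "\<rho> h * intertwiner_sum G \<rho> \<sigma> X = ?S (\<lambda>g. \<rho> h * (\<rho> g * X * \<sigma> (inv g)))"
    unfolding intertwiner_sum_def using X by (simp add: mult_mat_sum[OF rc[OF h] fc])
  also have "\<dots> = ?S (\<lambda>g. \<rho> (h \<otimes> g) * X * \<sigma> (inv g))"
  proof (rule mat_sum_cong)
    fix g assume g: "g \<in> carrier G"
    have "\<rho> h * (\<rho> g * X * \<sigma> (inv g)) = \<rho> h * (\<rho> g * X) * \<sigma> (inv g)"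
      using rc[OF h] rc[OF g] sc[of "inv g"] g X by (simp add: assoc_mult_mat[of _ m m _ k _ k])
    also have "\<rho> h * (\<rho> g * X) = \<rho> (h \<otimes> g) * X"
      unfolding rep_mult[OF r h g] by (rule assoc_mult_mat[symmetric, OF rc[OF h] rc[OF g] X])
    finally show "\<rho> h * (\<rho> g * X * \<sigma> (inv g)) = \<rho> (h \<otimes> g) * X * \<sigma> (inv g)" .
  qed
  also have "\<dots> = ?S (\<lambda>g. \<rho> (h \<otimes> (inv h \<otimes> g)) * X * \<sigma> (inv (inv h \<otimes> g)))"
    by (rule mat_sum_reindex[OF bij_betw_mult_left[OF inv_closed[OF h]]])
  also have "\<dots> = ?S (\<lambda>g. \<rho> g * X * \<sigma> (inv g) * \<sigma> h)"
  proof (rule mat_sum_cong)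
    fix g assume g: "g \<in> carrier G"
    have "h \<otimes> (inv h \<otimes> g) = g" using g h by (simp add: m_assoc[symmetric])
    moreover have "\<sigma> (inv (inv h \<otimes> g)) = \<sigma> (inv g) * \<sigma> h"
      using g h rep_mult[OF s _ h] by (simp add: inv_mult_group)
    moreover have "\<rho> g * X * (\<sigma> (inv g) * \<sigma> h) = \<rho> g * X * \<sigma> (inv g) * \<sigma> h"
      using rc[OF g] X sc[OF h] sc[of "inv g"] g
      by (intro assoc_mult_mat[symmetric, of _ m k]) auto
    ultimately show "\<rho> (h \<otimes> (inv h \<otimes> g)) * X * \<sigma> (inv (inv h \<otimes> g)) = \<rho> g * X * \<sigma> (inv g) * \<sigma> h"
      by simp
  qed
  also have "\<dots> = intertwiner_sum G \<rho> \<sigma> X * \<sigma> h"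
    unfolding intertwiner_sum_def using X by (simp add: mat_sum_mult[OF sc[OF h] fc])
  finally show "\<rho> h * intertwiner_sum G \<rho> \<sigma> X = intertwiner_sum G \<rho> \<sigma> X * \<sigma> h" .
qed

lemma (in group) rep_invariant_form:
  assumes fin: "finite (carrier G)" and r: "is_rep G n \<rho>"
  shows "\<exists>M\<in>carrier_mat n n. injective_mat M \<and> (\<forall>g\<in>carrier G. mat_adjoint (\<rho> g) * M * \<rho> g = M)"
proof -
  have rc: "\<And>h. h \<in> carrier G \<Longrightarrow> \<rho> h \<in> carrier_mat n n" using rep_carrier[OF r] .
  have fc: "\<And>h. h \<in> carrier G \<Longrightarrow> mat_adjoint (\<rho> h) * \<rho> h \<in> carrier_mat n n"
    using rc by (metis mat_adjoint_carrier mult_carrier_mat)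
  define M where "M = mat_sum n n (carrier G) (\<lambda>h. mat_adjoint (\<rho> h) * \<rho> h)"
  have M: "M \<in> carrier_mat n n" unfolding M_def by simp
  have "injective_mat M"
    unfolding injective_mat_def
  proof (intro ballI impI)
    fix v assume "v \<in> carrier_vec (dim_col M)" and "M *\<^sub>v v = 0\<^sub>v (dim_row M)"
    then have v: "v \<in> carrier_vec n" and Mv: "M *\<^sub>v v = 0\<^sub>v n" using M by auto
    have "(\<Sum>h\<in>carrier G. (\<rho> h *\<^sub>v v) \<bullet>c (\<rho> h *\<^sub>v v)) = (M *\<^sub>v v) \<bullet>c v"
    proof -
      have "(\<rho> h *\<^sub>v v) \<bullet>c (\<rho> h *\<^sub>v v) = ((mat_adjoint (\<rho> h) * \<rho> h) *\<^sub>v v) \<bullet>c v"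
        if h: "h \<in> carrier G" for h
        using mat_adjoint_cscalar_prod[OF rc[OF h] _ v, of "\<rho> h *\<^sub>v v"] rc[OF h] v
          assoc_mult_mat_vec[of "mat_adjoint (\<rho> h)" n n "\<rho> h" n v] by simp
      then show ?thesis unfolding M_def by (simp add: mat_sum_mult_vec_cscalar_prod[OF fc v v])
    qed
    also have "\<dots> = 0" using Mv v by simp
    finally have "(\<rho> \<one> *\<^sub>v v) \<bullet>c (\<rho> \<one> *\<^sub>v v) = 0"
      using fin by (subst (asm) sum_nonneg_eq_0_iff) auto
    then show "v = 0\<^sub>v (dim_col M)" using rep_one[OF r] v M by simp
  qed
  moreover have "mat_adjoint (\<rho> g) * M * \<rho> g = M" if g: "g \<in> carrier G" for g
  proof -
    have "mat_adjoint (\<rho> g) * M * \<rho> g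
        = mat_sum n n (carrier G) (\<lambda>h. mat_adjoint (\<rho> g) * (mat_adjoint (\<rho> h) * \<rho> h) * \<rho> g)"
      unfolding M_def using rc[OF g] fc
      by (simp add: mult_mat_sum[of _ n n] mat_sum_mult[of _ n n] mult_carrier_mat[of _ n n _ n])
    also have "\<dots> = mat_sum n n (carrier G) (\<lambda>h. mat_adjoint (\<rho> (h \<otimes> g)) * \<rho> (h \<otimes> g))"
    proof (rule mat_sum_cong)
      fix h assume h: "h \<in> carrier G"
      have "mat_adjoint (\<rho> (h \<otimes> g)) = mat_adjoint (\<rho> g) * mat_adjoint (\<rho> h)"
        using mat_adjoint_mult rc[OF h] rc[OF g] rep_mult[OF r h g] by simp
      then show "mat_adjoint (\<rho> g) * (mat_adjoint (\<rho> h) * \<rho> h) * \<rho> g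
          = mat_adjoint (\<rho> (h \<otimes> g)) * \<rho> (h \<otimes> g)"
        using rc[OF h] rc[OF g] rep_mult[OF r h g] mat_adjoint_carrier[OF rc[OF h]]
          mat_adjoint_carrier[OF rc[OF g]]
        by (simp add: assoc_mult_mat[of _ n n _ n _ n] mult_carrier_mat[of _ n n _ n])
    qed
    also have "\<dots> = M"
      unfolding M_def by (rule mat_sum_reindex[OF bij_betw_mult_right[OF g], symmetric])
    finally show ?thesis .
  qed
  ultimately show ?thesis using M by blast
qed

lemma (in group) character_inv:
  assumes fin: "finite (carrier G)" and r: "is_rep G n \<rho>" and g: "g \<in> carrier G"
  shows "mat_trace (\<rho> (inv g)) = cnj (mat_trace (\<rho> g))"
proof -
  have rc: "\<And>h. h \<in> carrier G \<Longrightarrow> \<rho> h \<in> carrier_mat n n" using rep_carrier[OF r] .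
  obtain M where M: "M \<in> carrier_mat n n" and inj: "injective_mat M"
    and inv: "mat_adjoint (\<rho> g) * M * \<rho> g = M"
    using rep_invariant_form[OF fin r] g by blast
  obtain K where K: "K \<in> carrier_mat n n" "M * K = 1\<^sub>m n" "K * M = 1\<^sub>m n"
    using injective_square_mat_invertible[OF M inj] by blast
  have gi: "inv g \<in> carrier G" using g by simp
  have adj: "mat_adjoint (\<rho> g) \<in> carrier_mat n n" using rc[OF g] by simp
  \<comment> \<open>invariance of M means that the adjoint of \<open>\<rho> g\<close> is conjugate to \<open>\<rho> (inv g)\<close>\<close>
  have "mat_adjoint (\<rho> g) = mat_adjoint (\<rho> g) * M * (\<rho> g * \<rho> (inv g)) * K"
    using adj M K rep_inv(1)[OF r g] right_mult_one_mat[OF adj]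
    by (simp add: assoc_mult_mat[of _ n n _ n _ n] mult_carrier_mat[of _ n n _ n])
  also have "\<dots> = (mat_adjoint (\<rho> g) * M * \<rho> g) * (\<rho> (inv g) * K)"
    using adj M K rc[OF g] rc[OF gi]
    by (simp add: assoc_mult_mat[of _ n n _ n _ n] mult_carrier_mat[of _ n n _ n])
  also have "\<dots> = M * (\<rho> (inv g) * K)" unfolding inv ..
  finally have "cnj (mat_trace (\<rho> g)) = mat_trace (M * (\<rho> (inv g) * K))"
    using mat_trace_mat_adjoint[OF rc[OF g]] by simp
  also have "\<dots> = mat_trace (\<rho> (inv g) * K * M)"
    using M K rc[OF gi] by (simp add: mat_trace_mult_comm[of M n n] assoc_mult_mat[of _ n n _ n _ n])
  also have "\<dots> = mat_trace (\<rho> (inv g))"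
    using M K rc[OF gi] by (simp add: assoc_mult_mat[of _ n n _ n _ n])
  finally show ?thesis by simp
qed

section \<open>Schur's lemma and orthogonality of characters\<close>

lemma intertwiner_injective_or_zero:
  assumes r: "is_rep G m \<rho>" and s: "is_irrep G k \<sigma>" and T: "T \<in> carrier_mat m k"
    and tw: "intertwines G \<rho> \<sigma> T"
  shows "T = 0\<^sub>m m k \<or> injective_mat T"
proof -
  define K where "K = {v \<in> carrier_vec k. T *\<^sub>v v = 0\<^sub>v m}"
  have "invariant_subspace G k \<sigma> K"
    unfolding invariant_subspace_def
  proof (intro conjI ballI allI)
    show "K \<subseteq> carrier_vec k" "0\<^sub>v k \<in> K" unfolding K_def using mult_mat_vec_zero[OF T] by auto
  next
    fix v w assume "v \<in> K" "w \<in> K"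
    then show "v + w \<in> K" unfolding K_def using T by (auto simp: mult_add_distrib_mat_vec[OF T])
  next
    fix c v assume "v \<in> K"
    then show "c \<cdot>\<^sub>v v \<in> K" unfolding K_def using T by (auto simp: mult_mat_vec[OF T])
  next
    fix g v assume g: "g \<in> carrier G" and v: "v \<in> K"
    have sg: "\<sigma> g \<in> carrier_mat k k" using rep_carrier[OF irrep_rep[OF s] g] .
    have rg: "\<rho> g \<in> carrier_mat m m" using rep_carrier[OF r g] .
    have "T *\<^sub>v (\<sigma> g *\<^sub>v v) = (\<rho> g * T) *\<^sub>v v"
      using v T sg tw g unfolding K_def intertwines_def by simp
    also have "\<dots> = 0\<^sub>v m" using v T rg mult_mat_vec_zero[OF rg] unfolding K_def by simp
    finally show "\<sigma> g *\<^sub>v v \<in> K" using v sg unfolding K_def by simp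
  qed
  then have "K = {0\<^sub>v k} \<or> K = carrier_vec k" by (rule irrep_invariant_subspace[OF s])
  then show ?thesis
  proof
    assume "K = {0\<^sub>v k}"
    then show ?thesis unfolding injective_mat_def K_def using T by auto
  next
    assume "K = carrier_vec k"
    then have "T = 0\<^sub>m m k" by (intro mat_eq_if_mult_vec_eq[OF T zero_carrier_mat]) (auto simp: K_def)
    then show ?thesis ..
  qed
qed

lemma intertwiner_surjective_or_zero:
  assumes r: "is_irrep G m \<rho>" and s: "is_rep G k \<sigma>" and T: "T \<in> carrier_mat m k"
    and tw: "intertwines G \<rho> \<sigma> T"
  shows "T = 0\<^sub>m m k \<or> mat_range T = carrier_vec m"
proof -
  have "invariant_subspace G m \<rho> (mat_range T)"
    unfolding invariant_subspace_iff
  proof (intro conjI ballI)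
    show "is_subspace m (mat_range T)" by (rule is_subspace_mat_range[OF T])
  next
    fix g w assume g: "g \<in> carrier G" and "w \<in> mat_range T"
    then obtain v where v: "v \<in> carrier_vec k" and w: "w = T *\<^sub>v v"
      using T unfolding mat_range_def by auto
    have "\<rho> g *\<^sub>v w = T *\<^sub>v (\<sigma> g *\<^sub>v v)"
      using v T rep_carrier[OF irrep_rep[OF r] g] rep_carrier[OF s g] tw g
      unfolding w intertwines_def by (simp flip: assoc_mult_mat_vec)
    then show "\<rho> g *\<^sub>v w \<in> mat_range T"
      using v T rep_carrier[OF s g] unfolding mat_range_def by auto
  qed
  then have "mat_range T = {0\<^sub>v m} \<or> mat_range T = carrier_vec m"
    by (rule irrep_invariant_subspace[OF r])
  moreover have "T = 0\<^sub>m m k" if "mat_range T = {0\<^sub>v m}"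
    using that T by (intro mat_eq_if_mult_vec_eq[OF T zero_carrier_mat]) (auto simp: mat_range_def)
  ultimately show ?thesis by blast
qed

lemma intertwiner_irreps_same_character:
  assumes r: "is_irrep G m \<rho>" and s: "is_irrep G k \<sigma>" and T: "T \<in> carrier_mat m k"
    and tw: "intertwines G \<rho> \<sigma> T" and nz: "T \<noteq> 0\<^sub>m m k" and g: "g \<in> carrier G"
  shows "mat_trace (\<sigma> g) = mat_trace (\<rho> g)"
proof -
  have inj: "injective_mat T"
    using intertwiner_injective_or_zero[OF irrep_rep[OF r] s T tw] nz by auto
  have surj: "mat_range T = carrier_vec m"
    using intertwiner_surjective_or_zero[OF r irrep_rep[OF s] T tw] nz by auto
  obtain L where L: "L \<in> carrier_mat k m" "L * T = 1\<^sub>m k"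
    using injective_mat_left_inverse[OF T inj] by auto
  have TL: "T * L = 1\<^sub>m m"
  proof (rule mat_eq_if_mult_vec_eq)
    fix w :: "complex vec" assume "w \<in> carrier_vec m"
    then obtain v where v: "v \<in> carrier_vec k" and w: "w = T *\<^sub>v v"
      using surj T unfolding mat_range_def by auto
    have "L *\<^sub>v w = v" using assoc_mult_mat_vec[OF L(1) T v, symmetric] L(2) v unfolding w by simp
    then show "(T * L) *\<^sub>v w = 1\<^sub>m m *\<^sub>v w" using v T L unfolding w by simp
  qed (use T L in auto)
  have rg: "\<rho> g \<in> carrier_mat m m" and sg: "\<sigma> g \<in> carrier_mat k k"
    using rep_carrier[OF irrep_rep[OF r] g] rep_carrier[OF irrep_rep[OF s] g] .
  have "\<sigma> g = L * (T * \<sigma> g)" using L T sg by (simp flip: assoc_mult_mat)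
  also have "T * \<sigma> g = \<rho> g * T" using tw g unfolding intertwines_def by simp
  finally have "mat_trace (\<sigma> g) = mat_trace ((\<rho> g * T) * L)"
    using mat_trace_mult_comm[OF L(1), of "\<rho> g * T"] rg T by simp
  also have "\<dots> = mat_trace (\<rho> g)" using rg T L TL by (simp add: assoc_mult_mat[of _ m m _ k _ m])
  finally show ?thesis .
qed

lemma intertwiner_irrep_scalar:
  assumes r: "is_irrep G m \<rho>" and T: "T \<in> carrier_mat m m" and tw: "intertwines G \<rho> \<rho> T"
  shows "\<exists>c. T = c \<cdot>\<^sub>m 1\<^sub>m m"
proof -
  obtain c where "eigenvalue T c"
    using spectrum_non_empty[OF T irrep_dim_pos[OF r]] unfolding spectrum_def by auto
  then obtain v where v: "v \<in> carrier_vec m" "v \<noteq> 0\<^sub>v m" "char_matrix T c *\<^sub>v v = 0\<^sub>v m"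
    using eigenvector_char_matrix[OF T] unfolding eigenvalue_def by auto
  have C: "char_matrix T c \<in> carrier_mat m m" using T by simp
  have "intertwines G \<rho> \<rho> (char_matrix T c)"
    unfolding intertwines_def
  proof
    fix g assume g: "g \<in> carrier G"
    have rg: "\<rho> g \<in> carrier_mat m m" using rep_carrier[OF irrep_rep[OF r] g] .
    show "\<rho> g * char_matrix T c = char_matrix T c * \<rho> g"
      using tw g rg T unfolding char_matrix_def intertwines_def
      by (simp add: mult_add_distrib_mat[OF rg] add_mult_distrib_mat[of _ m m _ _ m]
          mult_smult_distrib[OF rg one_carrier_mat] mult_smult_assoc_mat[of _ m m _ m])
  qed
  then have "char_matrix T c = 0\<^sub>m m m"
    using intertwiner_injective_or_zero[OF irrep_rep[OF r] r C] v C unfolding injective_mat_def by auto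
  have "T = c \<cdot>\<^sub>m 1\<^sub>m m"
  proof (rule eq_matI)
    fix i j assume "i < dim_row (c \<cdot>\<^sub>m 1\<^sub>m m)" "j < dim_col (c \<cdot>\<^sub>m 1\<^sub>m m)"
    then have ij: "i < m" "j < m" by auto
    have "char_matrix T c $$ (i,j) = 0" using \<open>char_matrix T c = 0\<^sub>m m m\<close> ij by simp
    then show "T $$ (i,j) = (c \<cdot>\<^sub>m 1\<^sub>m m) $$ (i,j)" using ij T by (simp add: char_matrix_def)
  qed (use T in auto)
  then show ?thesis ..
qed

lemma (in group) character_product_sum:
  assumes r: "is_rep G m \<rho>" and s: "is_rep G k \<sigma>"
  shows "(\<Sum>g\<in>carrier G. mat_trace (\<rho> g) * mat_trace (\<sigma> (inv g)))
       = (\<Sum>a<m. \<Sum>b<k. intertwiner_sum G \<rho> \<sigma> (matrix_unit m k a b) $$ (a,b))"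
proof -
  have "intertwiner_sum G \<rho> \<sigma> (matrix_unit m k a b) $$ (a,b)
      = (\<Sum>g\<in>carrier G. \<rho> g $$ (a,a) * \<sigma> (inv g) $$ (b,b))" if ab: "a < m" "b < k" for a b
    unfolding intertwiner_sum_def using ab
    by (auto intro!: sum.cong mult_matrix_unit_mult_index rep_carrier[OF r] rep_carrier[OF s])
  then have "(\<Sum>a<m. \<Sum>b<k. intertwiner_sum G \<rho> \<sigma> (matrix_unit m k a b) $$ (a,b))
      = (\<Sum>a<m. \<Sum>b<k. \<Sum>g\<in>carrier G. \<rho> g $$ (a,a) * \<sigma> (inv g) $$ (b,b))"
    by simp
  also have "\<dots> = (\<Sum>a<m. \<Sum>g\<in>carrier G. \<Sum>b<k. \<rho> g $$ (a,a) * \<sigma> (inv g) $$ (b,b))"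
    by (rule sum.cong[OF refl], rule sum.swap)
  also have "\<dots> = (\<Sum>g\<in>carrier G. \<Sum>a<m. \<Sum>b<k. \<rho> g $$ (a,a) * \<sigma> (inv g) $$ (b,b))"
    by (rule sum.swap)
  also have "\<dots> = (\<Sum>g\<in>carrier G. mat_trace (\<rho> g) * mat_trace (\<sigma> (inv g)))"
  proof (rule sum.cong[OF refl])
    fix g assume g: "g \<in> carrier G"
    have "dim_row (\<rho> g) = m" "dim_row (\<sigma> (inv g)) = k"
      using rep_carrier[OF r g] rep_carrier[OF s inv_closed[OF g]] by auto
    then show "(\<Sum>a<m. \<Sum>b<k. \<rho> g $$ (a,a) * \<sigma> (inv g) $$ (b,b))
        = mat_trace (\<rho> g) * mat_trace (\<sigma> (inv g))"
      by (simp add: mat_trace_def sum_product)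
  qed
  finally show ?thesis by simp
qed

lemma (in group) irrep_character_product_sum_nonzero:
  assumes r: "is_irrep G m \<rho>" and s: "is_irrep G k \<sigma>"
    and nz: "(\<Sum>g\<in>carrier G. mat_trace (\<rho> g) * mat_trace (\<sigma> (inv g))) \<noteq> 0"
    and g: "g \<in> carrier G"
  shows "mat_trace (\<sigma> g) = mat_trace (\<rho> g)"
proof -
  from nz obtain a b where "a < m" "b < k"
    and nz_ab: "intertwiner_sum G \<rho> \<sigma> (matrix_unit m k a b) \<noteq> 0\<^sub>m m k"
    unfolding character_product_sum[OF irrep_rep[OF r] irrep_rep[OF s]]
    by (metis (no_types, lifting) index_zero_mat(1) lessThan_iff sum.neutral)
  have "intertwines G \<rho> \<sigma> (intertwiner_sum G \<rho> \<sigma> (matrix_unit m k a b))"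
    using intertwines_intertwiner_sum irrep_rep[OF r] irrep_rep[OF s] by simp
  then show ?thesis
    using intertwiner_irreps_same_character[OF r s _ _ nz_ab g] by simp
qed

lemma (in group) mat_trace_intertwiner_sum_self:
  assumes r: "is_rep G m \<rho>" and X: "X \<in> carrier_mat m m"
  shows "mat_trace (intertwiner_sum G \<rho> \<rho> X) = of_nat (card (carrier G)) * mat_trace X"
proof -
  have rc: "\<And>g. g \<in> carrier G \<Longrightarrow> \<rho> g \<in> carrier_mat m m" using rep_carrier[OF r] .
  have "mat_trace (\<rho> g * X * \<rho> (inv g)) = mat_trace X" if g: "g \<in> carrier G" for g
  proof -
    have "mat_trace (\<rho> g * X * \<rho> (inv g)) = mat_trace (\<rho> (inv g) * (\<rho> g * X))"
      using mult_carrier_mat[OF rc[OF g] X] rc[of "inv g"] g by (intro mat_trace_mult_comm) auto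
    also have "\<dots> = mat_trace X"
      using rc g X rep_inv(2)[OF r g] by (simp add: assoc_mult_mat[of _ m m _ m _ m, symmetric])
    finally show ?thesis .
  qed
  moreover have "\<rho> g * X * \<rho> (inv g) \<in> carrier_mat m m" if "g \<in> carrier G" for g
    using rc that X by (meson inv_closed mult_carrier_mat)
  moreover have "intertwiner_sum G \<rho> \<rho> X = mat_sum m m (carrier G) (\<lambda>g. \<rho> g * X * \<rho> (inv g))"
    using X by (simp add: intertwiner_sum_def)
  ultimately show ?thesis by (simp add: mat_trace_mat_sum)
qed

lemma (in group) irrep_character_product_sum_self:
  assumes r: "is_irrep G m \<rho>"
  shows "(\<Sum>g\<in>carrier G. mat_trace (\<rho> g) * mat_trace (\<rho> (inv g))) = of_nat (card (carrier G))"
proof -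
  let ?N = "of_nat (card (carrier G)) :: complex"
  have m: "m > 0" and rr: "is_rep G m \<rho>" using irrep_dim_pos[OF r] irrep_rep[OF r] .
  have "intertwiner_sum G \<rho> \<rho> (matrix_unit m m a b) $$ (a,b) = (if a = b then ?N / of_nat m else 0)"
    if ab: "a < m" "b < m" for a b
  proof -
    obtain c where c: "intertwiner_sum G \<rho> \<rho> (matrix_unit m m a b) = c \<cdot>\<^sub>m 1\<^sub>m m"
      using intertwiner_irrep_scalar[OF r _ intertwines_intertwiner_sum[OF rr rr]] by fastforce
    have "mat_trace (c \<cdot>\<^sub>m 1\<^sub>m m) = c * of_nat m" by (simp add: mat_trace_def)
    then have "c * of_nat m = ?N * (if a = b then 1 else 0)"
      using mat_trace_intertwiner_sum_self[OF rr, of "matrix_unit m m a b"] ab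
      by (simp add: c mat_trace_matrix_unit)
    then show ?thesis using c ab m by (auto simp: field_simps)
  qed
  then show ?thesis using m by (simp add: character_product_sum[OF rr rr])
qed

lemma (in group) rep_inner_eq_character_product_sum:
  assumes fin: "finite (carrier G)" and s: "is_rep G k \<sigma>"
  shows "rep_inner G \<rho> \<sigma>
       = (\<Sum>g\<in>carrier G. mat_trace (\<rho> g) * mat_trace (\<sigma> (inv g))) / of_nat (card (carrier G))"
  unfolding rep_inner_def using character_inv[OF fin s] by (simp cong: sum.cong)

lemma (in group) rep_inner_irreps:
  assumes fin: "finite (carrier G)" and r: "is_irrep G m \<rho>" and s: "is_irrep G k \<sigma>"
  shows "rep_inner G \<rho> \<sigma> = (if \<forall>g\<in>carrier G. mat_trace (\<sigma> g) = mat_trace (\<rho> g) then 1 else 0)"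
proof -
  let ?S = "\<Sum>g\<in>carrier G. mat_trace (\<rho> g) * mat_trace (\<sigma> (inv g))"
  have inner: "rep_inner G \<rho> \<sigma> = ?S / of_nat (card (carrier G))"
    by (rule rep_inner_eq_character_product_sum[OF fin irrep_rep[OF s]])
  show ?thesis
  proof (cases "\<forall>g\<in>carrier G. mat_trace (\<sigma> g) = mat_trace (\<rho> g)")
    case True
    then have "?S = (\<Sum>g\<in>carrier G. mat_trace (\<rho> g) * mat_trace (\<rho> (inv g)))"
      by (intro sum.cong) simp_all
    also have "\<dots> = of_nat (card (carrier G))" by (rule irrep_character_product_sum_self[OF r])
    finally show ?thesis
      using True inner fin one_closed by (auto simp: card_gt_0_iff)
  next
    case False
    then have "?S = 0" using irrep_character_product_sum_nonzero[OF r s] by blast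
    then show ?thesis using False inner by simp
  qed
qed

section \<open>Complete reducibility and integrality of inner products\<close>

lemma equivariant_idempotent_subrep:
  assumes r: "is_rep G n \<theta>" and E: "E \<in> carrier_mat n n" and idem: "E * E = E"
    and tw: "intertwines G \<theta> \<theta> E"
  shows "\<exists>k \<rho>. is_rep G k \<rho> \<and> of_nat k = mat_trace E \<and>
     (\<forall>g\<in>carrier G. mat_trace (\<rho> g) = mat_trace (\<theta> g * E)) \<and> (k = 0 \<longrightarrow> E = 0\<^sub>m n n)"
proof -
  have tc: "\<And>g. g \<in> carrier G \<Longrightarrow> \<theta> g \<in> carrier_mat n n" using rep_carrier[OF r] .
  obtain k B where B: "B \<in> carrier_mat n k" and inj: "injective_mat B" and range_B: "mat_range B = mat_range E"
    using subspace_eq_mat_range[OF is_subspace_mat_range[OF E]] by blast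
  obtain L where L: "L \<in> carrier_mat k n" and LB: "L * B = 1\<^sub>m k" using injective_mat_left_inverse[OF B inj] by auto
  have BL: "B * L \<in> carrier_mat n n" using B L by simp
  have EB: "E * B = B"
  proof (rule mat_eq_if_mult_vec_eq)
    fix c :: "complex vec" assume c: "c \<in> carrier_vec k"
    then obtain w where w: "w \<in> carrier_vec n" "B *\<^sub>v c = E *\<^sub>v w"
      using range_B B E unfolding mat_range_def by (metis (no_types, lifting) carrier_matD(2) image_eqI imageE)
    have "E *\<^sub>v (E *\<^sub>v w) = (E * E) *\<^sub>v w" using E w by simp
    then show "(E * B) *\<^sub>v c = B *\<^sub>v c" using E B c w idem by simp
  qed (use E B in auto)
  have BLE: "B * L * E = E"
  proof (rule mat_eq_if_mult_vec_eq)
    fix v :: "complex vec" assume v: "v \<in> carrier_vec n"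
    then obtain c where c: "c \<in> carrier_vec k" "E *\<^sub>v v = B *\<^sub>v c"
      using range_B B E unfolding mat_range_def by (metis (no_types, lifting) carrier_matD(2) image_eqI imageE)
    have "L *\<^sub>v (B *\<^sub>v c) = c" using assoc_mult_mat_vec[OF L B c(1), symmetric] LB c by simp
    moreover have "(B * L * E) *\<^sub>v v = B *\<^sub>v (L *\<^sub>v (E *\<^sub>v v))"
      using B L E v by (simp add: assoc_mult_mat_vec[of B n k "L * E" n v] assoc_mult_mat_vec[of L k n E n v])
    ultimately show "(B * L * E) *\<^sub>v v = E *\<^sub>v v" using c by simp
  qed (use E BL in auto)
  define \<rho> where "\<rho> g = L * (\<theta> g * B)" for g
  have tB: "\<theta> g * B \<in> carrier_mat n k" if "g \<in> carrier G" for g using tc[OF that] B by simp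
  have LE: "L * E \<in> carrier_mat k n" using L E by simp
  have \<rho>c: "\<rho> g \<in> carrier_mat k k" if "g \<in> carrier G" for g
    unfolding \<rho>_def using L tB[OF that] by simp
  have E\<theta>B: "E * (\<theta> g * B) = \<theta> g * B" if g: "g \<in> carrier G" for g
  proof -
    have "E * (\<theta> g * B) = (\<theta> g * E) * B"
      using tw g assoc_mult_mat[OF E tc[OF g] B] unfolding intertwines_def by simp
    also have "\<dots> = \<theta> g * B" using assoc_mult_mat[OF tc[OF g] E B] EB by simp
    finally show ?thesis .
  qed
  have \<theta>B: "\<theta> g * B = B * \<rho> g" if g: "g \<in> carrier G" for g
  proof -
    have "\<theta> g * B = (B * L * E) * (\<theta> g * B)" using BLE E\<theta>B[OF g] by simp
    also have "\<dots> = B * \<rho> g"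
      using assoc_mult_mat[OF BL E tB[OF g]] assoc_mult_mat[OF B L tB[OF g]] E\<theta>B[OF g]
      unfolding \<rho>_def by simp
    finally show ?thesis .
  qed
  have "is_rep G k \<rho>" unfolding is_rep_def
  proof (intro conjI ballI)
    show "\<rho> \<one>\<^bsub>G\<^esub> = 1\<^sub>m k" unfolding \<rho>_def rep_one[OF r] using B LB by simp
  next
    fix g h assume g: "g \<in> carrier G" and h: "h \<in> carrier G"
    have "\<rho> (g \<otimes>\<^bsub>G\<^esub> h) = L * (\<theta> g * (\<theta> h * B))"
      unfolding \<rho>_def rep_mult[OF r g h] assoc_mult_mat[OF tc[OF g] tc[OF h] B] ..
    also have "\<dots> = L * (\<theta> g * (B * \<rho> h))" unfolding \<theta>B[OF h] ..
    also have "\<dots> = \<rho> g * \<rho> h"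
      using assoc_mult_mat[OF tc[OF g] B \<rho>c[OF h]] assoc_mult_mat[OF L tB[OF g] \<rho>c[OF h]]
      unfolding \<rho>_def by simp
    finally show "\<rho> (g \<otimes>\<^bsub>G\<^esub> h) = \<rho> g * \<rho> h" .
  qed (use \<rho>c in auto)
  moreover have "of_nat k = mat_trace E"
  proof -
    have "mat_trace E = mat_trace (B * (L * E))" using BLE assoc_mult_mat[OF B L E] by simp
    also have "\<dots> = mat_trace (L * (E * B))"
      using mat_trace_mult_comm[OF B LE] assoc_mult_mat[OF L E B] by simp
    finally show ?thesis using EB LB by simp
  qed
  moreover have "mat_trace (\<rho> g) = mat_trace (\<theta> g * E)" if g: "g \<in> carrier G" for g
  proof -
    have "mat_trace (\<theta> g * E) = mat_trace ((\<theta> g * B) * (L * E))"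
      using BLE assoc_mult_mat[OF B L E] assoc_mult_mat[OF tc[OF g] B LE] by simp
    also have "\<dots> = mat_trace (L * (E * (\<theta> g * B)))"
      using mat_trace_mult_comm[OF tB[OF g] LE] assoc_mult_mat[OF L E tB[OF g]] by simp
    finally show ?thesis unfolding E\<theta>B[OF g] \<rho>_def by simp
  qed
  moreover have "E = 0\<^sub>m n n" if "k = 0"
  proof -
    have "B * L = 0\<^sub>m n n" using B L that by (intro eq_matI) (auto simp: scalar_prod_def)
    then show ?thesis using BLE E by simp
  qed
  ultimately show ?thesis by blast
qed

lemma (in group) equivariant_projection_exists:
  assumes fin: "finite (carrier G)" and r: "is_rep G n \<theta>"
    and W: "invariant_subspace G n \<theta> W" and W0: "W \<noteq> {0\<^sub>v n}" and W1: "W \<noteq> carrier_vec n"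
  shows "\<exists>Q\<in>carrier_mat n n. Q * Q = Q \<and> intertwines G \<theta> \<theta> Q \<and> Q \<noteq> 0\<^sub>m n n \<and> Q \<noteq> 1\<^sub>m n"
proof -
  have tc: "\<And>g. g \<in> carrier G \<Longrightarrow> \<theta> g \<in> carrier_mat n n" using rep_carrier[OF r] .
  have Ws: "is_subspace n W" and W_inv: "\<And>g v. g \<in> carrier G \<Longrightarrow> v \<in> W \<Longrightarrow> \<theta> g *\<^sub>v v \<in> W"
    using W unfolding invariant_subspace_iff by auto
  have Wc: "W \<subseteq> carrier_vec n" using Ws unfolding is_subspace_def by auto
  obtain k B where B: "B \<in> carrier_mat n k" and inj: "injective_mat B" and WB: "mat_range B = W"
    using subspace_eq_mat_range[OF Ws] by auto
  obtain L where L: "L \<in> carrier_mat k n" and LB: "L * B = 1\<^sub>m k"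
    using injective_mat_left_inverse[OF B inj] by auto
  \<comment> \<open>\<open>P\<close> is a projection onto \<open>W\<close>; averaging it over the group makes it equivariant\<close>
  define P where "P = B * L"
  have P: "P \<in> carrier_mat n n" unfolding P_def using B L by simp
  have P_fix: "P *\<^sub>v w = w" if "w \<in> W" for w
  proof -
    from that obtain c where c: "c \<in> carrier_vec k" and w: "w = B *\<^sub>v c"
      using B unfolding WB[symmetric] mat_range_def by auto
    have "L *\<^sub>v (B *\<^sub>v c) = c" using assoc_mult_mat_vec[OF L B c, symmetric] LB c by simp
    then show ?thesis unfolding P_def w using B L c by simp
  qed
  have P_range: "P *\<^sub>v v \<in> W" if "v \<in> carrier_vec n" for v
    unfolding WB[symmetric] P_def mat_range_def using B L that by (auto intro!: image_eqI[of _ _ "L *\<^sub>v v"])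
  have P\<theta>P: "P * \<theta> g * P = \<theta> g * P" if g: "g \<in> carrier G" for g
  proof (rule mat_eq_if_mult_vec_eq)
    fix v :: "complex vec" assume v: "v \<in> carrier_vec n"
    have "(P * \<theta> g * P) *\<^sub>v v = P *\<^sub>v (\<theta> g *\<^sub>v (P *\<^sub>v v))"
      unfolding assoc_mult_mat_vec[OF mult_carrier_mat[OF P tc[OF g]] P v]
        assoc_mult_mat_vec[OF P tc[OF g] mult_mat_vec_carrier[OF P v]] ..
    also have "\<dots> = \<theta> g *\<^sub>v (P *\<^sub>v v)" by (rule P_fix[OF W_inv[OF g P_range[OF v]]])
    finally show "(P * \<theta> g * P) *\<^sub>v v = (\<theta> g * P) *\<^sub>v v" using P tc[OF g] v by simp
  qed (use P tc[OF g] in auto)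
  define N where "N = card (carrier G)"
  have N0: "N > 0" unfolding N_def using fin one_closed by (auto simp: card_gt_0_iff)
  define S where "S = intertwiner_sum G \<theta> \<theta> P"
  have S: "S \<in> carrier_mat n n" unfolding S_def using P by simp
  have S_def': "S = mat_sum n n (carrier G) (\<lambda>g. \<theta> g * P * \<theta> (inv g))"
    unfolding S_def intertwiner_sum_def using P by simp
  have fc: "\<And>g. g \<in> carrier G \<Longrightarrow> \<theta> g * P * \<theta> (inv g) \<in> carrier_mat n n"
    using tc P by (meson inv_closed mult_carrier_mat)
  have SP: "S * P = of_nat N \<cdot>\<^sub>m P"
  proof -
    have "S * P = mat_sum n n (carrier G) (\<lambda>g. \<theta> g * P * \<theta> (inv g) * P)"
      unfolding S_def' by (rule mat_sum_mult[OF P fc])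
    also have "\<dots> = mat_sum n n (carrier G) (\<lambda>g. P)"
    proof (rule mat_sum_cong)
      fix g assume g: "g \<in> carrier G"
      have gi: "inv g \<in> carrier G" using g by simp
      have "\<theta> g * P * \<theta> (inv g) * P = \<theta> g * (P * \<theta> (inv g) * P)"
        using tc[OF g] tc[OF gi] P by (simp add: assoc_mult_mat[of _ n n _ n _ n] mult_carrier_mat[of _ n n _ n])
      also have "\<dots> = (\<theta> g * \<theta> (inv g)) * P"
        using tc[OF g] tc[OF gi] P P\<theta>P[OF gi] by (simp add: assoc_mult_mat[of _ n n _ n _ n])
      finally show "\<theta> g * P * \<theta> (inv g) * P = P" using rep_inv(1)[OF r g] P by simp
    qed
    also have "\<dots> = of_nat N \<cdot>\<^sub>m P" unfolding N_def by (rule mat_sum_const[OF P])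
    finally show ?thesis .
  qed
  have PS: "P * S = S"
  proof -
    have "P * S = mat_sum n n (carrier G) (\<lambda>g. P * (\<theta> g * P * \<theta> (inv g)))"
      unfolding S_def' by (rule mult_mat_sum[OF P fc])
    also have "\<dots> = S" unfolding S_def'
    proof (rule mat_sum_cong)
      fix g assume g: "g \<in> carrier G"
      have gi: "inv g \<in> carrier G" using g by simp
      have "P * (\<theta> g * P * \<theta> (inv g)) = (P * \<theta> g * P) * \<theta> (inv g)"
        using tc[OF g] tc[OF gi] P by (simp add: assoc_mult_mat[of _ n n _ n _ n] mult_carrier_mat[of _ n n _ n])
      then show "P * (\<theta> g * P * \<theta> (inv g)) = \<theta> g * P * \<theta> (inv g)" unfolding P\<theta>P[OF g] .
    qed
    finally show ?thesis .
  qed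
  define Q where "Q = (1 / of_nat N) \<cdot>\<^sub>m S"
  have Q: "Q \<in> carrier_mat n n" unfolding Q_def using S by simp
  have QP: "Q * P = P"
    unfolding Q_def mult_smult_assoc_mat[OF S P] SP using N0 P by (intro eq_matI) auto
  have PQ: "P * Q = Q"
    unfolding Q_def mult_smult_distrib[OF P S] PS ..
  have "Q * Q = Q" using assoc_mult_mat[OF Q P Q] unfolding PQ QP by simp
  moreover have "intertwines G \<theta> \<theta> Q"
    unfolding intertwines_def
  proof
    fix g assume g: "g \<in> carrier G"
    have "\<theta> g * S = S * \<theta> g"
      using intertwines_intertwiner_sum[OF r r P] g unfolding intertwines_def S_def by blast
    then show "\<theta> g * Q = Q * \<theta> g"
      unfolding Q_def mult_smult_distrib[OF tc[OF g] S] mult_smult_assoc_mat[OF S tc[OF g]] by simp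
  qed
  moreover have "Q \<noteq> 0\<^sub>m n n"
  proof
    assume "Q = 0\<^sub>m n n"
    moreover obtain w where w: "w \<in> W" "w \<noteq> 0\<^sub>v n" using W0 Ws unfolding is_subspace_def by auto
    moreover have "Q *\<^sub>v w = w"
      using P_fix[OF w(1)] assoc_mult_mat_vec[OF Q P, of w] Wc w(1) QP by auto
    ultimately show False using Wc by auto
  qed
  moreover have "Q \<noteq> 1\<^sub>m n"
  proof
    assume "Q = 1\<^sub>m n"
    then have "P = 1\<^sub>m n" using PQ P by simp
    then show False using W1 Wc P_range by auto
  qed
  ultimately show ?thesis using Q by blast
qed

text \<open>Decompositions are recorded through characters only, which is all that \<open>rep_inner\<close> sees.\<close>

definition irrep_decomposition ::
  "('a,'b) monoid_scheme \<Rightarrow> ('a \<Rightarrow> complex mat) \<Rightarrow> ('a \<Rightarrow> complex mat) list \<Rightarrow> bool" where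
  "irrep_decomposition G \<theta> \<rho>s \<longleftrightarrow> (\<forall>\<rho>\<in>set \<rho>s. \<exists>m. is_irrep G m \<rho>) \<and>
     (\<forall>g\<in>carrier G. mat_trace (\<theta> g) = (\<Sum>\<rho>\<leftarrow>\<rho>s. mat_trace (\<rho> g)))"

lemma irrep_decomposition_irrep: "irrep_decomposition G \<theta> \<rho>s \<Longrightarrow> \<rho> \<in> set \<rho>s \<Longrightarrow> \<exists>m. is_irrep G m \<rho>"
  and irrep_decomposition_character:
    "irrep_decomposition G \<theta> \<rho>s \<Longrightarrow> g \<in> carrier G \<Longrightarrow> mat_trace (\<theta> g) = (\<Sum>\<rho>\<leftarrow>\<rho>s. mat_trace (\<rho> g))"
  by (simp_all add: irrep_decomposition_def)

lemma (in group) irrep_decomposition_exists: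
  assumes fin: "finite (carrier G)" and "is_rep G n \<theta>"
  shows "\<exists>\<rho>s. irrep_decomposition G \<theta> \<rho>s"
  using assms(2)
proof (induction n arbitrary: \<theta> rule: less_induct)
  case (less n \<theta>)
  have tc: "\<And>g. g \<in> carrier G \<Longrightarrow> \<theta> g \<in> carrier_mat n n" using rep_carrier[OF less.prems] .
  consider "n = 0" | "is_irrep G n \<theta>"
    | W where "invariant_subspace G n \<theta> W" "W \<noteq> {0\<^sub>v n}" "W \<noteq> carrier_vec n"
    using less.prems unfolding is_irrep_def by auto
  then show ?case
  proof cases
    case 1
    then have "dim_row (\<theta> g) = 0" if "g \<in> carrier G" for g using tc[OF that] by simp
    then have "irrep_decomposition G \<theta> []" by (simp add: irrep_decomposition_def mat_trace_def)
    then show ?thesis ..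
  next
    case 2
    then have "irrep_decomposition G \<theta> [\<theta>]" by (auto simp: irrep_decomposition_def)
    then show ?thesis ..
  next
    case 3
    then obtain Q where Q: "Q \<in> carrier_mat n n" and QQ: "Q * Q = Q" and tw: "intertwines G \<theta> \<theta> Q"
      and Q0: "Q \<noteq> 0\<^sub>m n n" and Q1: "Q \<noteq> 1\<^sub>m n"
      using equivariant_projection_exists[OF fin less.prems] by blast
    have Q': "1\<^sub>m n - Q \<in> carrier_mat n n" using Q by (intro minus_carrier_mat) simp
    obtain k1 \<rho>1 where r1: "is_rep G k1 \<rho>1" and k1: "of_nat k1 = mat_trace Q"
      and t1: "\<forall>g\<in>carrier G. mat_trace (\<rho>1 g) = mat_trace (\<theta> g * Q)" and z1: "k1 = 0 \<longrightarrow> Q = 0\<^sub>m n n"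
      using equivariant_idempotent_subrep[OF less.prems Q QQ tw] by blast
    obtain k2 \<rho>2 where r2: "is_rep G k2 \<rho>2" and k2: "of_nat k2 = mat_trace (1\<^sub>m n - Q)"
      and t2: "\<forall>g\<in>carrier G. mat_trace (\<rho>2 g) = mat_trace (\<theta> g * (1\<^sub>m n - Q))"
      and z2: "k2 = 0 \<longrightarrow> 1\<^sub>m n - Q = 0\<^sub>m n n"
      using equivariant_idempotent_subrep[OF less.prems Q' idempotent_one_minus[OF Q QQ]
          intertwines_one_minus[OF tw Q tc]] by blast
    have "of_nat (k1 + k2) = (of_nat n :: complex)"
      using k1 k2 mat_trace_minus[OF one_carrier_mat Q] by simp
    then have kn: "k1 + k2 = n" by (simp only: of_nat_eq_iff)
    have "1\<^sub>m n - Q \<noteq> 0\<^sub>m n n"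
    proof
      assume "1\<^sub>m n - Q = 0\<^sub>m n n"
      then have "Q $$ (i,j) = 1\<^sub>m n $$ (i,j)" if "i < n" "j < n" for i j
        using Q that by (metis carrier_matD index_minus_mat(1) index_zero_mat(1) right_minus_eq)
      then have "Q = 1\<^sub>m n" using Q by (intro eq_matI) auto
      with Q1 show False ..
    qed
    then have "k1 < n" "k2 < n" using kn z1 z2 Q0 by auto
    then obtain \<rho>s1 \<rho>s2 where "irrep_decomposition G \<rho>1 \<rho>s1" "irrep_decomposition G \<rho>2 \<rho>s2"
      using less.IH r1 r2 by meson
    moreover have "mat_trace (\<theta> g) = mat_trace (\<rho>1 g) + mat_trace (\<rho>2 g)" if g: "g \<in> carrier G" for g
      using t1 t2 g mat_trace_minus[OF tc[OF g] mult_carrier_mat[OF tc[OF g] Q]]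
        mult_minus_distrib_mat[OF tc[OF g] one_carrier_mat Q] tc[OF g] by simp
    ultimately have "irrep_decomposition G \<theta> (\<rho>s1 @ \<rho>s2)"
      unfolding irrep_decomposition_def by auto
    then show ?thesis ..
  qed
qed

lemma sum_list_rep_inner:
  "(\<Sum>\<rho>\<leftarrow>\<rho>s. rep_inner G \<rho> \<chi>)
     = (\<Sum>g\<in>carrier G. (\<Sum>\<rho>\<leftarrow>\<rho>s. mat_trace (\<rho> g)) * cnj (mat_trace (\<chi> g))) / of_nat (card (carrier G))"
  unfolding rep_inner_def by (induction \<rho>s) (simp_all add: sum.distrib distrib_right add_divide_distrib)

lemma rep_inner_sum_list_left:
  assumes "\<And>g. g \<in> carrier G \<Longrightarrow> mat_trace (\<theta> g) = (\<Sum>\<rho>\<leftarrow>\<rho>s. mat_trace (\<rho> g))"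
  shows "rep_inner G \<theta> \<chi> = (\<Sum>\<rho>\<leftarrow>\<rho>s. rep_inner G \<rho> \<chi>)"
  unfolding sum_list_rep_inner unfolding rep_inner_def by (simp add: assms cong: sum.cong)

lemma rep_inner_swap: "rep_inner G \<sigma> \<rho> = cnj (rep_inner G \<rho> \<sigma>)"
  unfolding rep_inner_def by (simp add: mult.commute)

lemma (in group) rep_inner_in_Nats:
  assumes fin: "finite (carrier G)" and a: "is_rep G m \<alpha>" and b: "is_rep G k \<beta>"
  shows "rep_inner G \<alpha> \<beta> \<in> \<nat>"
proof -
  obtain \<rho>s where \<rho>s: "irrep_decomposition G \<alpha> \<rho>s" using irrep_decomposition_exists[OF fin a] ..
  obtain \<sigma>s where \<sigma>s: "irrep_decomposition G \<beta> \<sigma>s" using irrep_decomposition_exists[OF fin b] ..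
  have "rep_inner G \<rho> \<beta> \<in> \<nat>" if \<rho>_in: "\<rho> \<in> set \<rho>s" for \<rho>
  proof -
    obtain m' where \<rho>: "is_irrep G m' \<rho>" using irrep_decomposition_irrep[OF \<rho>s \<rho>_in] ..
    have "rep_inner G \<beta> \<rho> = (\<Sum>\<sigma>\<leftarrow>\<sigma>s. rep_inner G \<sigma> \<rho>)"
      by (rule rep_inner_sum_list_left[OF irrep_decomposition_character[OF \<sigma>s]])
    also have "\<dots> \<in> \<nat>"
    proof (rule sum_list_in_Nats)
      fix \<sigma> assume "\<sigma> \<in> set \<sigma>s"
      then obtain k' where "is_irrep G k' \<sigma>" using irrep_decomposition_irrep[OF \<sigma>s] by blast
      then show "rep_inner G \<sigma> \<rho> \<in> \<nat>" using rep_inner_irreps[OF fin _ \<rho>] by simp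
    qed
    finally obtain j where "rep_inner G \<beta> \<rho> = of_nat j" by (rule Nats_cases)
    then show ?thesis using rep_inner_swap[of G \<rho> \<beta>] by simp
  qed
  moreover have "rep_inner G \<alpha> \<beta> = (\<Sum>\<rho>\<leftarrow>\<rho>s. rep_inner G \<rho> \<beta>)"
    by (rule rep_inner_sum_list_left[OF irrep_decomposition_character[OF \<rho>s]])
  ultimately show ?thesis by (simp add: sum_list_in_Nats)
qed

section \<open>The regular representation and coset representatives\<close>

lemma (in group) regular_rep_exists:
  assumes fin: "finite (carrier G)"
  shows "\<exists>R. is_rep G (card (carrier G)) R \<and>
     (\<forall>g\<in>carrier G. mat_trace (R g) = (if g = \<one> then of_nat (card (carrier G)) else 0))"
proof -
  define N where "N = card (carrier G)"
  obtain e where e: "bij_betw e {0..<N} (carrier G)"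
    unfolding N_def using ex_bij_betw_nat_finite[OF fin] by auto
  have eG: "\<And>i. i < N \<Longrightarrow> e i \<in> carrier G" using e by (auto simp: bij_betw_def)
  have e_inj: "\<And>i j. i < N \<Longrightarrow> j < N \<Longrightarrow> e i = e j \<Longrightarrow> i = j"
    using e by (auto simp: bij_betw_def inj_on_def)
  have e_surj: "\<And>x. x \<in> carrier G \<Longrightarrow> \<exists>i<N. e i = x" using e by (force simp: bij_betw_def)
  \<comment> \<open>the permutation matrix of left multiplication by \<open>g\<close> in the basis indexed by \<open>e\<close>\<close>
  define R where "R g = mat N N (\<lambda>(i,j). if e i = g \<otimes> e j then 1 else (0::complex))" for g
  have "is_rep G N R" unfolding is_rep_def
  proof (intro conjI ballI)
    show "R \<one> = 1\<^sub>m N" unfolding R_def by (rule eq_matI) (auto simp: eG e_inj)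
  next
    fix g h assume g: "g \<in> carrier G" and h: "h \<in> carrier G"
    show "R (g \<otimes> h) = R g * R h"
    proof (rule eq_matI)
      fix i j assume "i < dim_row (R g * R h)" "j < dim_col (R g * R h)"
      then have ij: "i < N" "j < N" by (auto simp: R_def)
      obtain l0 where l0: "l0 < N" "e l0 = h \<otimes> e j" using e_surj[of "h \<otimes> e j"] h eG[OF ij(2)] by auto
      have "(R g * R h) $$ (i,j)
          = (\<Sum>l<N. (if e i = g \<otimes> e l then 1 else 0) * (if e l = h \<otimes> e j then 1 else (0::complex)))"
        using ij by (auto simp: R_def scalar_prod_def lessThan_atLeast0 intro!: sum.cong)
      also have "\<dots> = (\<Sum>l<N. if l = l0 then (if e i = g \<otimes> e l0 then 1 else 0) else (0::complex))"
        by (rule sum.cong) (use l0 e_inj in auto)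
      also have "\<dots> = R (g \<otimes> h) $$ (i,j)" using l0 ij g h eG[OF ij(2)] by (simp add: R_def m_assoc)
      finally show "R (g \<otimes> h) $$ (i,j) = (R g * R h) $$ (i,j)" by simp
    qed (auto simp: R_def)
  qed (auto simp: R_def)
  moreover have "mat_trace (R g) = (if g = \<one> then of_nat N else 0)" if g: "g \<in> carrier G" for g
  proof -
    have "(e i = g \<otimes> e i) \<longleftrightarrow> g = \<one>" if "i < N" for i
      using r_cancel_one[OF eG[OF that] g] by auto
    then have "mat_trace (R g) = (\<Sum>i<N. if g = \<one> then 1 else 0)"
      unfolding mat_trace_def by (intro sum.cong) (auto simp: R_def)
    then show ?thesis by simp
  qed
  ultimately show ?thesis unfolding N_def by blast
qed

lemma (in group) coset_reps_exist:
  assumes fin: "finite (carrier G)" and H: "subgroup H G"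
  shows "\<exists>rs. distinct rs \<and> set rs \<subseteq> carrier G \<and>
      (\<forall>x\<in>carrier G. \<exists>!i. i < length rs \<and> x \<in> (rs ! i) <#\<^bsub>G\<^esub> H)"
proof -
  obtain cs where cs: "set cs = (\<lambda>x. x <#\<^bsub>G\<^esub> H) ` carrier G" "distinct cs"
    using finite_distinct_list[of "(\<lambda>x. x <#\<^bsub>G\<^esub> H) ` carrier G"] fin by auto
  define rep where "rep C = (SOME x. x \<in> carrier G \<and> C = x <#\<^bsub>G\<^esub> H)" for C
  have rep: "rep C \<in> carrier G \<and> C = rep C <#\<^bsub>G\<^esub> H" if "C \<in> set cs" for C
  proof -
    from that obtain x where "x \<in> carrier G" "C = x <#\<^bsub>G\<^esub> H" using cs(1) by auto
    then show ?thesis unfolding rep_def by (rule someI[of "\<lambda>y. y \<in> carrier G \<and> C = y <#\<^bsub>G\<^esub> H", OF conjI])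
  qed
  define rs where "rs = map rep cs"
  have rs_nth: "rs ! i <#\<^bsub>G\<^esub> H = cs ! i" "rs ! i \<in> carrier G" if "i < length cs" for i
    using rep[of "cs ! i"] that unfolding rs_def by auto
  have "distinct rs" unfolding rs_def distinct_map using cs(2) by (metis inj_onI rep)
  moreover have "set rs \<subseteq> carrier G" unfolding rs_def using rep by auto
  moreover have "\<exists>!i. i < length rs \<and> x \<in> (rs ! i) <#\<^bsub>G\<^esub> H" if x: "x \<in> carrier G" for x
  proof -
    have x_coset: "x \<in> x <#\<^bsub>G\<^esub> H" using x subgroup.one_closed[OF H] unfolding l_coset_def by force
    obtain i where i: "i < length cs" "cs ! i = x <#\<^bsub>G\<^esub> H"
      using x cs(1) by (metis imageI in_set_conv_nth)
    show ?thesis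
    proof (rule ex1I[of _ i])
      have "rs ! i <#\<^bsub>G\<^esub> H = x <#\<^bsub>G\<^esub> H" using rs_nth(1)[OF i(1)] i(2) by simp
      then show "i < length rs \<and> x \<in> rs ! i <#\<^bsub>G\<^esub> H" using i(1) x_coset by (simp add: rs_def)
    next
      fix j assume j: "j < length rs \<and> x \<in> rs ! j <#\<^bsub>G\<^esub> H"
      then have jc: "j < length cs" by (simp add: rs_def)
      then have "rs ! j <#\<^bsub>G\<^esub> H = x <#\<^bsub>G\<^esub> H"
        using l_repr_independence[OF _ rs_nth(2)[OF jc] H] j by blast
      then have "cs ! j = cs ! i" using rs_nth(1)[OF jc] i(2) by simp
      then show "j = i" using cs(2) jc i(1) by (simp add: nth_eq_iff_index_eq)
    qed
  qed
  ultimately show ?thesis by blast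
qed

lemma (in group) card_le_length_coset_reps:
  assumes fin: "finite (carrier G)" and H: "subgroup H G"
  shows "card (carrier G) \<le> length (coset_reps G H) * card H"
proof -
  define rs where "rs = coset_reps G H"
  have covers: "carrier G \<subseteq> (\<Union>i<length rs. rs ! i <#\<^bsub>G\<^esub> H)"
    using someI_ex[OF coset_reps_exist[OF fin H]] unfolding rs_def coset_reps_def by blast
  have fH: "finite H" using finite_subset[OF subgroup.subset[OF H] fin] .
  have "card (carrier G) \<le> card (\<Union>i<length rs. rs ! i <#\<^bsub>G\<^esub> H)"
    using covers fH by (intro card_mono) (auto simp: l_coset_def)
  also have "\<dots> \<le> (\<Sum>i<length rs. card (rs ! i <#\<^bsub>G\<^esub> H))" by (rule card_UN_le) simp
  also have "\<dots> \<le> (\<Sum>i<length rs. card H)"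
  proof (rule sum_mono)
    fix i assume "i \<in> {..<length rs}"
    have "rs ! i <#\<^bsub>G\<^esub> H = (\<lambda>h. rs ! i \<otimes> h) ` H" unfolding l_coset_def by auto
    then show "card (rs ! i <#\<^bsub>G\<^esub> H) \<le> card H" using fH by (simp add: card_image_le)
  qed
  finally show ?thesis unfolding rs_def by (simp add: mult.commute)
qed

lemma (in group) regular_character_decomposition:
  assumes fin: "finite (carrier G)"
  obtains \<psi>s where "\<And>\<psi>. \<psi> \<in> set \<psi>s \<Longrightarrow> \<exists>m. is_irrep G m \<psi>"
    and "\<And>g. g \<in> carrier G \<Longrightarrow> (\<Sum>\<psi>\<leftarrow>\<psi>s. mat_trace (\<psi> g)) = (if g = \<one> then of_nat (card (carrier G)) else 0)"
proof -
  obtain R where R: "is_rep G (card (carrier G)) R"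
    and R_tr: "\<forall>g\<in>carrier G. mat_trace (R g) = (if g = \<one> then of_nat (card (carrier G)) else 0)"
    using regular_rep_exists[OF fin] by blast
  obtain \<psi>s where "irrep_decomposition G R \<psi>s" using irrep_decomposition_exists[OF fin R] ..
  then show ?thesis
    using that irrep_decomposition_irrep irrep_decomposition_character R_tr by metis
qed

lemma sum_list_rep_inner_concentrated:
  assumes fin: "finite (carrier M)" and one: "\<one>\<^bsub>M\<^esub> \<in> carrier M" and \<chi>: "is_rep M d \<chi>"
    and conc: "\<And>g. g \<in> carrier M \<Longrightarrow> (\<Sum>\<psi>\<leftarrow>\<psi>s. mat_trace (\<psi> g)) = (if g = \<one>\<^bsub>M\<^esub> then c else 0)"
  shows "(\<Sum>\<psi>\<leftarrow>\<psi>s. rep_inner M \<psi> \<chi>) = c * of_nat d / of_nat (card (carrier M))"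
proof -
  have "(\<Sum>\<psi>\<leftarrow>\<psi>s. rep_inner M \<psi> \<chi>)
      = (\<Sum>g\<in>carrier M. if g = \<one>\<^bsub>M\<^esub> then c * of_nat d else 0) / of_nat (card (carrier M))"
    unfolding sum_list_rep_inner using rep_one[OF \<chi>] by (auto simp: conc intro!: sum.cong)
  then show ?thesis using fin one by simp
qed

lemma (in group) rep_inner_multiplicities:
  assumes fin: "finite (carrier G)" and reps: "\<And>\<psi>. \<psi> \<in> set \<psi>s \<Longrightarrow> \<exists>m. is_rep G m \<psi>"
    and \<beta>: "is_rep G k \<beta>"
  obtains f where "\<And>\<psi>. \<psi> \<in> set \<psi>s \<Longrightarrow> rep_inner G \<psi> \<beta> = of_nat (f \<psi>)"
proof -
  have "\<forall>\<psi>\<in>set \<psi>s. \<exists>j. rep_inner G \<psi> \<beta> = of_nat j"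
    using rep_inner_in_Nats[OF fin _ \<beta>] reps by (blast elim: Nats_cases)
  then show ?thesis using that by metis
qed

lemma (in group) regular_character_multiplicities:
  assumes fin: "finite (carrier G)" and HG: "subgroup H G" and \<chi>: "is_rep (G\<lparr>carrier := H\<rparr>) d \<chi>"
    and irr: "\<And>\<psi>. \<psi> \<in> set \<psi>s \<Longrightarrow> \<exists>m. is_irrep G m \<psi>"
    and reg: "\<And>g. g \<in> carrier G \<Longrightarrow>
      (\<Sum>\<psi>\<leftarrow>\<psi>s. mat_trace (\<psi> g)) = (if g = \<one> then of_nat (card (carrier G)) else 0)"
  obtains t where "\<And>\<psi>. \<psi> \<in> set \<psi>s \<Longrightarrow> rep_inner (G\<lparr>carrier := H\<rparr>) \<psi> \<chi> = of_nat (t \<psi>)"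
    and "(\<Sum>\<psi>\<leftarrow>\<psi>s. t \<psi>) * card H = card (carrier G) * d"
proof -
  define K where "K = G\<lparr>carrier := H\<rparr>"
  have K: "group K" unfolding K_def by (rule subgroup_imp_group[OF HG])
  have HsG: "H \<subseteq> carrier G" and one_H: "\<one> \<in> H" using subgroup.subset[OF HG] subgroup.one_closed[OF HG] .
  have finK: "finite (carrier K)" and H0: "card H > 0"
    using finite_subset[OF HsG fin] one_H by (auto simp: K_def card_gt_0_iff)
  have "\<exists>m. is_rep K m \<psi>" if "\<psi> \<in> set \<psi>s" for \<psi>
    using irr[OF that] irrep_rep rep_subgroup[OF _ HsG] unfolding K_def by blast
  then obtain t where t: "\<And>\<psi>. \<psi> \<in> set \<psi>s \<Longrightarrow> rep_inner K \<psi> \<chi> = of_nat (t \<psi>)"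
    using group.rep_inner_multiplicities[OF K finK _ \<chi>[folded K_def]] by blast
  have "of_nat (\<Sum>\<psi>\<leftarrow>\<psi>s. t \<psi>) = (\<Sum>\<psi>\<leftarrow>\<psi>s. rep_inner K \<psi> \<chi>)" using t by (induction \<psi>s) auto
  also have "\<dots> = of_nat (card (carrier G)) * of_nat d / of_nat (card H)"
    using sum_list_rep_inner_concentrated[of K d \<chi> \<psi>s] finK one_H HsG reg \<chi> unfolding K_def by auto
  finally have "of_nat ((\<Sum>\<psi>\<leftarrow>\<psi>s. t \<psi>) * card H) = (of_nat (card (carrier G) * d) :: complex)"
    using H0 by (simp add: field_simps)
  then have "(\<Sum>\<psi>\<leftarrow>\<psi>s. t \<psi>) * card H = card (carrier G) * d" by (simp only: of_nat_eq_iff)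
  with t show ?thesis using that unfolding K_def by blast
qed

theorem lemma9p3:
  fixes G :: "('a,'b) monoid_scheme" and H :: "'a set"
    and \<theta> \<chi> :: "'a \<Rightarrow> complex mat" and n d :: nat
  assumes "group G" and "finite (carrier G)" and "subgroup H G"
    and "is_rep G n \<theta>"
    and "is_rep (G\<lparr>carrier := H\<rparr>) d \<chi>" and "d > 0"
    and "\<forall>m \<rho>. is_irrep G m \<rho> \<and> rep_inner G \<rho> \<theta> \<noteq> 0
                 \<longrightarrow> rep_inner (G\<lparr>carrier := H\<rparr>) \<rho> \<chi> \<noteq> 0"
  shows "\<exists>m \<rho>. is_irrep G m \<rho> \<and> rep_inner (G\<lparr>carrier := H\<rparr>) \<rho> \<chi> \<noteq> 0 \<and>
           Re (rep_inner G \<rho> \<theta>) \<ge> real n / real (dim_row (ind_rep G H d \<chi> \<one>\<^bsub>G\<^esub>))"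
proof -
  note G = assms(1) and fin = assms(2) and HG = assms(3)
  define len where "len = length (coset_reps G H)"
  have H0: "card H > 0" and N0: "card (carrier G) > 0"
    using finite_subset[OF subgroup.subset[OF HG] fin] subgroup.one_closed[OF HG] subgroup.subset[OF HG] fin
    by (auto simp: card_gt_0_iff)
  obtain \<psi>s where irr: "\<And>\<psi>. \<psi> \<in> set \<psi>s \<Longrightarrow> \<exists>m. is_irrep G m \<psi>"
    and reg: "\<And>g. g \<in> carrier G \<Longrightarrow>
      (\<Sum>\<psi>\<leftarrow>\<psi>s. mat_trace (\<psi> g)) = (if g = \<one>\<^bsub>G\<^esub> then of_nat (card (carrier G)) else 0)"
    using group.regular_character_decomposition[OF G fin] by blast
  have "is_rep (G\<lparr>carrier := carrier G\<rparr>) n \<theta>" using assms(4) by simp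
  then obtain a where a: "\<And>\<psi>. \<psi> \<in> set \<psi>s \<Longrightarrow> rep_inner G \<psi> \<theta> = of_nat (a \<psi>)"
    and "(\<Sum>\<psi>\<leftarrow>\<psi>s. a \<psi>) * card (carrier G) = card (carrier G) * n"
    using group.regular_character_multiplicities[OF G fin group.subgroup_self[OF G] _ irr reg] by auto
  then have n: "n = (\<Sum>\<psi>\<leftarrow>\<psi>s. a \<psi>)" using N0 by simp
  obtain t where t: "\<And>\<psi>. \<psi> \<in> set \<psi>s \<Longrightarrow> rep_inner (G\<lparr>carrier := H\<rparr>) \<psi> \<chi> = of_nat (t \<psi>)"
    and t_sum: "(\<Sum>\<psi>\<leftarrow>\<psi>s. t \<psi>) * card H = card (carrier G) * d"
    using group.regular_character_multiplicities[OF G fin HG assms(5) irr reg] by blast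
  have "(\<Sum>\<psi>\<leftarrow>\<psi>s. t \<psi>) * card H \<le> (len * d) * card H"
    using group.card_le_length_coset_reps[OF G fin HG] by (simp add: t_sum len_def)
  then have t_le: "(\<Sum>\<psi>\<leftarrow>\<psi>s. t \<psi>) \<le> len * d" using H0 by simp
  have t_ne: "(\<Sum>\<psi>\<leftarrow>\<psi>s. t \<psi>) \<noteq> 0"
  proof
    assume "(\<Sum>\<psi>\<leftarrow>\<psi>s. t \<psi>) = 0"
    then have "card (carrier G) * d = 0" by (simp only: t_sum[symmetric] mult_zero_left)
    then show False using N0 assms(6) by simp
  qed
  have "t \<psi> \<noteq> 0" if \<psi>: "\<psi> \<in> set \<psi>s" and "a \<psi> \<noteq> 0" for \<psi>
  proof -
    obtain m where "is_irrep G m \<psi>" using irr[OF \<psi>] ..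
    then have "rep_inner (G\<lparr>carrier := H\<rparr>) \<psi> \<chi> \<noteq> 0" using assms(7) a[OF \<psi>] \<open>a \<psi> \<noteq> 0\<close> by simp
    then show ?thesis using t[OF \<psi>] by auto
  qed
  then obtain \<psi> where \<psi>: "\<psi> \<in> set \<psi>s" "t \<psi> \<noteq> 0" and "n \<le> a \<psi> * (\<Sum>\<psi>\<leftarrow>\<psi>s. t \<psi>)"
    using sum_list_le_max_mult_sum_list[OF _ t_ne] unfolding n by blast
  then have "n \<le> a \<psi> * (len * d)" using order.trans mult_le_mono2[OF t_le] by blast
  moreover have "dim_row (ind_rep G H d \<chi> \<one>\<^bsub>G\<^esub>) = len * d" by (simp add: ind_rep_def len_def Let_def)
  ultimately have "real n / real (dim_row (ind_rep G H d \<chi> \<one>\<^bsub>G\<^esub>)) \<le> Re (rep_inner G \<psi> \<theta>)"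
    using a[OF \<psi>(1)] by (cases "len * d = 0") (auto simp: divide_le_eq simp flip: of_nat_mult)
  moreover have "rep_inner (G\<lparr>carrier := H\<rparr>) \<psi> \<chi> \<noteq> 0" using t[OF \<psi>(1)] \<psi>(2) by simp
  ultimately show ?thesis using irr[OF \<psi>(1)] by blast
qed

end
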